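(* Let $\lambda,\mu\in[0,\infty)$ and let $\Phi$ be a local interaction on $V$ with $$\|\Phi\|:=\|\Phi\|_{\lambda,\mu}=\sup_{x\in V}\sum_{X\ni x}\|\Phi_X\|\,e^{\lambda|X|+\mu\operatorname{diam}(X)}<\infty .$$ Let $Q$ be an observable supported in a finite subset $Z\subset V$. If $Y\subset V$ is finite, then for every $s\in\mathbb C$ with $|s|<\lambda/(2\|\Phi\|)$, $$\|\Gamma^s_{H_Y}(Q)\|\le \|Q\|\,e^{\lambda|Z|}\,\frac{\lambda}{\lambda-2\|\Phi\|\,|s|}.$$ Moreover, if $Y'\subset V$ is finite and $Z\subset Y\subset Y'$, then for every $s\in\mathbb C$ with $|s|<\lambda/(2\|\Phi\|)$, $$\big\|\Gamma^s_{H_{Y'}}(Q)-\Gamma^s_{H_Y}(Q)\big\|\le \|Q\|\,e^{\lambda|Z|}\,\frac{2\|\Phi\|\,|s|\,\lambda}{(\lambda-2\|\Phi\|\,|s|)^2}\,e^{-\mu\operatorname{dist}(Z,V\setminus Y)}.$$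
   Context: $V$ is a (possibly infinite) set equipped with a metric $\operatorname{dist}$ (e.g. the vertex set of a graph with shortest-path distance); for $X,Y\subset V$, $\operatorname{dist}(X,Y)=\inf_{x\in X,y\in Y}\operatorname{dist}(x,y)$, and for finite $X$, $\operatorname{diam}(X)=\max_{x,y\in X}\operatorname{dist}(x,y)$. Each site carries $\mathbb C^D$; for finite $X\subset V$, $\mathcal H_X=\bigotimes_{v\in X}\mathbb C^D$ and $\mathfrak A_X=\mathcal B(\mathcal H_X)$, with $\mathfrak A_X\subset\mathfrak A_Y$ for $X\subset Y$ via $Q\mapsto Q\otimes\mathbb 1_{Y\setminus X}$. An observable is supported in $X$ if it belongs to $\mathfrak A_X$. A local interaction is a family $\Phi=(\Phi_X)_X$ indexed by finite subsets $X\subset V$ with $\Phi_X=\Phi_X^*\in\mathfrak A_X$. For finite $Y$, $H_Y=\sum_{X\subset Y}\Phi_X$, and $\Gamma^s_{H_Y}(Q)=e^{isH_Y}Qe^{-isH_Y}$ for $s\in\mathbb C$. $\|\cdot\|$ is the operator norm. *)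

theory Defs
  imports "HOL-Analysis.Analysis"
begin

text \<open>Configurations of the sites in X: basis of H_X = tensor product of C^D over X.
  A configuration is a function 'v => nat with values < D on X and 0 outside X.\<close>
type_synonym 'v cfg = "'v \<Rightarrow> nat"
text \<open>Operators are represented by their matrix entries w.r.t. the product basis.\<close>
type_synonym 'v mat = "'v cfg \<Rightarrow> 'v cfg \<Rightarrow> complex"

definition cfgs :: "nat \<Rightarrow> 'v set \<Rightarrow> 'v cfg set" where
  "cfgs D X = {\<sigma>. (\<forall>v\<in>X. \<sigma> v < D) \<and> (\<forall>v. v \<notin> X \<longrightarrow> \<sigma> v = 0)}"

definition restr :: "'v set \<Rightarrow> 'v cfg \<Rightarrow> 'v cfg" where
  "restr X \<sigma> = (\<lambda>v. if v \<in> X then \<sigma> v else 0)"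

text \<open>Embedding A_X into A_W (X subset W): A maps to A tensor identity on W - X.\<close>
definition emb :: "'v set \<Rightarrow> 'v mat \<Rightarrow> 'v mat" where
  "emb X A = (\<lambda>\<sigma> \<tau>. if (\<forall>v. v \<notin> X \<longrightarrow> \<sigma> v = \<tau> v)
                     then A (restr X \<sigma>) (restr X \<tau>) else 0)"

definition mmul :: "nat \<Rightarrow> 'v set \<Rightarrow> 'v mat \<Rightarrow> 'v mat \<Rightarrow> 'v mat" where
  "mmul D W A B = (\<lambda>\<sigma> \<tau>. \<Sum>\<rho>\<in>cfgs D W. A \<sigma> \<rho> * B \<rho> \<tau>)"

definition mone :: "'v mat" where
  "mone = (\<lambda>\<sigma> \<tau>. if \<sigma> = \<tau> then 1 else 0)"

fun mpow :: "nat \<Rightarrow> 'v set \<Rightarrow> 'v mat \<Rightarrow> nat \<Rightarrow> 'v mat" where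
  "mpow D W A 0 = mone"
| "mpow D W A (Suc n) = mmul D W A (mpow D W A n)"

definition mexp :: "nat \<Rightarrow> 'v set \<Rightarrow> 'v mat \<Rightarrow> 'v mat" where
  "mexp D W A = (\<lambda>\<sigma> \<tau>. \<Sum>n. mpow D W A n \<sigma> \<tau> / of_nat (fact n))"

definition opnorm :: "nat \<Rightarrow> 'v set \<Rightarrow> 'v mat \<Rightarrow> real" where
  "opnorm D W A = Sup {sqrt (\<Sum>\<sigma>\<in>cfgs D W. (cmod (\<Sum>\<tau>\<in>cfgs D W. A \<sigma> \<tau> * \<psi> \<tau>))\<^sup>2) | \<psi>.
                        (\<Sum>\<tau>\<in>cfgs D W. (cmod (\<psi> \<tau>))\<^sup>2) \<le> 1}"

definition ham :: "('v set \<Rightarrow> 'v mat) \<Rightarrow> 'v set \<Rightarrow> 'v mat" where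
  "ham \<Phi> Y = (\<lambda>\<sigma> \<tau>. \<Sum>X\<in>Pow Y. emb X (\<Phi> X) \<sigma> \<tau>)"

definition gam :: "nat \<Rightarrow> 'v set \<Rightarrow> 'v mat \<Rightarrow> complex \<Rightarrow> 'v mat \<Rightarrow> 'v mat" where
  "gam D W H s Q = mmul D W (mmul D W (mexp D W (\<lambda>\<sigma> \<tau>. \<i> * s * H \<sigma> \<tau>)) Q)
                              (mexp D W (\<lambda>\<sigma> \<tau>. - \<i> * s * H \<sigma> \<tau>))"

definition inorm_e :: "nat \<Rightarrow> real \<Rightarrow> real \<Rightarrow> ('v::metric_space set \<Rightarrow> 'v mat) \<Rightarrow> ennreal" where
  "inorm_e D lam mu \<Phi> = (SUP x. \<Sum>\<^sub>\<infinity>X\<in>{X. finite X \<and> x \<in> X}.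
       ennreal (opnorm D X (\<Phi> X) * exp (lam * real (card X) + mu * diameter X)))"

definition inorm :: "nat \<Rightarrow> real \<Rightarrow> real \<Rightarrow> ('v::metric_space set \<Rightarrow> 'v mat) \<Rightarrow> real" where
  "inorm D lam mu \<Phi> = enn2real (inorm_e D lam mu \<Phi>)"

end

theory Submission
  imports Defs
begin

text \<open>Expand \<open>\<Gamma>\<^sup>s(Q) = \<Sum>\<^sub>n (is)\<^sup>n / n! ad\<^sup>n(Q)\<close>, where \<open>ad\<close> is the commutator with
  \<open>H\<^sub>Y = \<Sum>\<^sub>X\<^sub>\<subseteq>\<^sub>Y \<Phi>\<^sub>X\<close>. The \<open>n\<close>-th term is a sum of nested commutators of \<open>Q\<close> with
  \<open>\<Phi>(X\<^sub>1), \<dots>, \<Phi>(X\<^sub>n)\<close>, and such a commutator vanishes unless every \<open>X\<^sub>k\<close> meets \<open>Z\<close> or an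
  earlier \<open>X\<^sub>j\<close>. A surviving term has norm at most \<open>2\<^sup>n \<parallel>Q\<parallel> \<Prod>\<^sub>k \<parallel>\<Phi>(X\<^sub>k)\<parallel>\<close>; summing over the
  linked sequences, with the weights \<open>exp (\<lambda> |X|)\<close> paying for the growth of the region reached,
  gives at most \<open>\<parallel>\<Phi>\<parallel>\<^sup>n exp (\<lambda> |Z|) n! / \<lambda>\<^sup>n\<close>, so the series is dominated by a geometric series
  of ratio \<open>2 \<parallel>\<Phi>\<parallel> |s| / \<lambda>\<close>. In the difference of the two dynamics only sequences leaving \<open>Y\<close>
  survive; they span a distance at least \<open>dist (Z, V - Y)\<close>, which the weights \<open>exp (\<mu> diam X)\<close>
  turn into the factor \<open>exp (- \<mu> dist (Z, V - Y))\<close>.\<close>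

section \<open>Configurations\<close>

lemma finite_cfgs: "finite W \<Longrightarrow> finite (cfgs D W)"
proof -
  assume W: "finite W"
  have "cfgs D W \<subseteq> (\<lambda>f v. if v \<in> W then f v else 0) ` PiE W (\<lambda>_. {..<D})"
  proof
    fix \<sigma> assume "\<sigma> \<in> cfgs D W"
    then have "restrict \<sigma> W \<in> PiE W (\<lambda>_. {..<D})" "\<sigma> = (\<lambda>v. if v \<in> W then restrict \<sigma> W v else 0)"
      by (auto simp: cfgs_def)
    then show "\<sigma> \<in> (\<lambda>f v. if v \<in> W then f v else 0) ` PiE W (\<lambda>_. {..<D})" by blast
  qed
  then show ?thesis using W by (meson finite_PiE finite_imageI finite_lessThan finite_subset)
qed

definition join_cfg :: "'v cfg \<Rightarrow> 'v cfg \<Rightarrow> 'v cfg" where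
  "join_cfg \<alpha> \<beta> = (\<lambda>v. \<alpha> v + \<beta> v)"

lemma restr_in_cfgs: "\<sigma> \<in> cfgs D W \<Longrightarrow> S \<subseteq> W \<Longrightarrow> restr S \<sigma> \<in> cfgs D S"
  by (auto simp: cfgs_def restr_def)

lemma restr_Diff_in_cfgs: "\<sigma> \<in> cfgs D W \<Longrightarrow> restr (W - S) \<sigma> \<in> cfgs D (W - S)"
  by (auto simp: cfgs_def restr_def)

lemma join_cfg_restr: "\<sigma> \<in> cfgs D W \<Longrightarrow> S \<subseteq> W \<Longrightarrow> join_cfg (restr S \<sigma>) (restr (W - S) \<sigma>) = \<sigma>"
  by (auto simp: cfgs_def restr_def join_cfg_def)

lemma join_cfg_in_cfgs:
  "\<alpha> \<in> cfgs D S \<Longrightarrow> \<beta> \<in> cfgs D (W - S) \<Longrightarrow> S \<subseteq> W \<Longrightarrow> join_cfg \<alpha> \<beta> \<in> cfgs D W"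
  unfolding cfgs_def join_cfg_def by (auto, case_tac "v \<in> S", auto)

lemma restr_join_cfg_left: "\<alpha> \<in> cfgs D S \<Longrightarrow> \<beta> \<in> cfgs D (W - S) \<Longrightarrow> restr S (join_cfg \<alpha> \<beta>) = \<alpha>"
  unfolding cfgs_def join_cfg_def restr_def by auto

lemma restr_join_cfg_right: "\<alpha> \<in> cfgs D S \<Longrightarrow> \<beta> \<in> cfgs D (W - S) \<Longrightarrow> restr (W - S) (join_cfg \<alpha> \<beta>) = \<beta>"
  unfolding cfgs_def join_cfg_def restr_def by auto

lemma sum_cfgs_split:
  assumes W: "finite W" and S: "S \<subseteq> W"
  shows "(\<Sum>\<sigma>\<in>cfgs D W. F \<sigma>) = (\<Sum>\<beta>\<in>cfgs D (W - S). \<Sum>\<alpha>\<in>cfgs D S. F (join_cfg \<alpha> \<beta>))"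
proof -
  let ?g = "\<lambda>(\<beta>, \<alpha>). join_cfg \<alpha> \<beta>"
  have "inj_on ?g (cfgs D (W - S) \<times> cfgs D S)"
    by (rule inj_onI, clarify) (metis restr_join_cfg_left restr_join_cfg_right)
  moreover have "?g ` (cfgs D (W - S) \<times> cfgs D S) = cfgs D W"
  proof
    show "?g ` (cfgs D (W - S) \<times> cfgs D S) \<subseteq> cfgs D W" using S by (auto intro: join_cfg_in_cfgs)
    show "cfgs D W \<subseteq> ?g ` (cfgs D (W - S) \<times> cfgs D S)"
    proof
      fix \<sigma> assume "\<sigma> \<in> cfgs D W"
      then have "\<sigma> = ?g (restr (W - S) \<sigma>, restr S \<sigma>)"
        and "(restr (W - S) \<sigma>, restr S \<sigma>) \<in> cfgs D (W - S) \<times> cfgs D S"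
        using S by (simp_all add: join_cfg_restr restr_in_cfgs restr_Diff_in_cfgs)
      then show "\<sigma> \<in> ?g ` (cfgs D (W - S) \<times> cfgs D S)" by blast
    qed
  qed
  ultimately have "(\<Sum>\<sigma>\<in>cfgs D W. F \<sigma>) = (\<Sum>p\<in>cfgs D (W - S) \<times> cfgs D S. F (?g p))"
    by (metis (no_types, lifting) sum.reindex_cong)
  then show ?thesis by (simp add: sum.cartesian_product split_def)
qed

lemma sum_cfgs_agree_outside:
  assumes W: "finite W" and S: "S \<subseteq> W" and \<sigma>: "\<sigma> \<in> cfgs D W"
  shows "(\<Sum>\<rho>\<in>cfgs D W. if \<forall>v. v \<notin> S \<longrightarrow> \<sigma> v = \<rho> v then F \<rho> else 0)
       = (\<Sum>\<alpha>\<in>cfgs D S. F (join_cfg \<alpha> (restr (W - S) \<sigma>)))"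
proof -
  let ?b = "restr (W - S) \<sigma>"
  have agree: "(\<forall>v. v \<notin> S \<longrightarrow> \<sigma> v = join_cfg \<alpha> \<beta> v) \<longleftrightarrow> \<beta> = ?b"
    if "\<alpha> \<in> cfgs D S" "\<beta> \<in> cfgs D (W - S)" for \<alpha> \<beta>
    using that \<sigma> unfolding cfgs_def join_cfg_def restr_def by (auto simp: fun_eq_iff) metis+
  have "(\<Sum>\<rho>\<in>cfgs D W. if \<forall>v. v \<notin> S \<longrightarrow> \<sigma> v = \<rho> v then F \<rho> else 0)
      = (\<Sum>\<beta>\<in>cfgs D (W - S). \<Sum>\<alpha>\<in>cfgs D S. if \<beta> = ?b then F (join_cfg \<alpha> \<beta>) else 0)"
    by (subst sum_cfgs_split[OF W S]) (intro sum.cong refl, simp add: agree)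
  also have "\<dots> = (\<Sum>\<beta>\<in>cfgs D (W - S). if \<beta> = ?b then \<Sum>\<alpha>\<in>cfgs D S. F (join_cfg \<alpha> \<beta>) else 0)"
    by (intro sum.cong refl) auto
  also have "\<dots> = (\<Sum>\<alpha>\<in>cfgs D S. F (join_cfg \<alpha> ?b))"
    using W \<sigma> by (simp add: finite_cfgs restr_Diff_in_cfgs)
  finally show ?thesis .
qed

section \<open>Vector and operator norms\<close>

definition vnorm :: "nat \<Rightarrow> 'v set \<Rightarrow> ('v cfg \<Rightarrow> complex) \<Rightarrow> real" where
  "vnorm D W \<psi> = L2_set (\<lambda>\<sigma>. cmod (\<psi> \<sigma>)) (cfgs D W)"

definition mapply :: "nat \<Rightarrow> 'v set \<Rightarrow> 'v mat \<Rightarrow> ('v cfg \<Rightarrow> complex) \<Rightarrow> ('v cfg \<Rightarrow> complex)" where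
  "mapply D W A \<psi> = (\<lambda>\<sigma>. \<Sum>\<tau>\<in>cfgs D W. A \<sigma> \<tau> * \<psi> \<tau>)"

lemma opnorm_eq_Sup_vnorm: "opnorm D W A = Sup {vnorm D W (mapply D W A \<psi>) | \<psi>. vnorm D W \<psi> \<le> 1}"
  unfolding opnorm_def vnorm_def mapply_def L2_set_def by (simp add: real_sqrt_le_1_iff)

lemma vnorm_nonneg: "0 \<le> vnorm D W \<psi>"
  by (simp add: vnorm_def)

lemma vnorm_cong: "(\<And>\<sigma>. \<sigma> \<in> cfgs D W \<Longrightarrow> \<psi> \<sigma> = \<phi> \<sigma>) \<Longrightarrow> vnorm D W \<psi> = vnorm D W \<phi>"
  unfolding vnorm_def by (rule L2_set_cong) simp_all

lemma vnorm_zero [simp]: "vnorm D W (\<lambda>_. 0) = 0"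
  by (simp add: vnorm_def L2_set_0')

lemma vnorm_mult: "vnorm D W (\<lambda>\<sigma>. c * \<psi> \<sigma>) = cmod c * vnorm D W \<psi>"
  unfolding vnorm_def norm_mult by (simp add: L2_set_right_distrib)

lemma vnorm_add_le: "vnorm D W (\<lambda>\<sigma>. \<psi> \<sigma> + \<phi> \<sigma>) \<le> vnorm D W \<psi> + vnorm D W \<phi>"
proof -
  have "vnorm D W (\<lambda>\<sigma>. \<psi> \<sigma> + \<phi> \<sigma>) \<le> L2_set (\<lambda>\<sigma>. cmod (\<psi> \<sigma>) + cmod (\<phi> \<sigma>)) (cfgs D W)"
    unfolding vnorm_def by (rule L2_set_mono) (auto simp: norm_triangle_ineq)
  also have "\<dots> \<le> vnorm D W \<psi> + vnorm D W \<phi>"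
    unfolding vnorm_def by (rule L2_set_triangle_ineq)
  finally show ?thesis .
qed

lemma norm_le_vnorm: "finite W \<Longrightarrow> \<sigma> \<in> cfgs D W \<Longrightarrow> cmod (\<psi> \<sigma>) \<le> vnorm D W \<psi>"
  unfolding vnorm_def by (rule member_le_L2_set) (simp_all add: finite_cfgs)

lemma vnorm_sq: "(vnorm D W \<psi>)\<^sup>2 = (\<Sum>\<sigma>\<in>cfgs D W. (cmod (\<psi> \<sigma>))\<^sup>2)"
  unfolding vnorm_def L2_set_def by (simp add: sum_nonneg)

lemma mapply_mult: "mapply D W A (\<lambda>\<sigma>. c * \<psi> \<sigma>) = (\<lambda>\<sigma>. c * mapply D W A \<psi> \<sigma>)"
  by (simp add: mapply_def sum_distrib_left mult.left_commute)

lemma mapply_mmul: "mapply D W (mmul D W A B) \<psi> = mapply D W A (mapply D W B \<psi>)"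
proof
  fix \<sigma>
  have "mapply D W (mmul D W A B) \<psi> \<sigma> = (\<Sum>\<tau>\<in>cfgs D W. \<Sum>\<rho>\<in>cfgs D W. A \<sigma> \<rho> * (B \<rho> \<tau> * \<psi> \<tau>))"
    by (simp add: mapply_def mmul_def sum_distrib_right mult.assoc)
  also have "\<dots> = mapply D W A (mapply D W B \<psi>) \<sigma>"
    by (subst sum.swap) (simp add: mapply_def sum_distrib_left)
  finally show "mapply D W (mmul D W A B) \<psi> \<sigma> = mapply D W A (mapply D W B \<psi>) \<sigma>" .
qed

lemma vnorm_mapply_le_entry_sum:
  assumes W: "finite W"
  shows "vnorm D W (mapply D W A \<psi>) \<le> (\<Sum>\<sigma>\<in>cfgs D W. \<Sum>\<tau>\<in>cfgs D W. cmod (A \<sigma> \<tau>)) * vnorm D W \<psi>"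
proof -
  have "vnorm D W (mapply D W A \<psi>) \<le> (\<Sum>\<sigma>\<in>cfgs D W. \<bar>cmod (mapply D W A \<psi> \<sigma>)\<bar>)"
    unfolding vnorm_def by (rule L2_set_le_sum_abs)
  also have "\<dots> \<le> (\<Sum>\<sigma>\<in>cfgs D W. \<Sum>\<tau>\<in>cfgs D W. cmod (A \<sigma> \<tau>) * vnorm D W \<psi>)"
  proof (rule sum_mono)
    fix \<sigma>
    have "\<bar>cmod (mapply D W A \<psi> \<sigma>)\<bar> \<le> (\<Sum>\<tau>\<in>cfgs D W. cmod (A \<sigma> \<tau>) * cmod (\<psi> \<tau>))"
      unfolding mapply_def by (simp add: norm_sum norm_mult[symmetric])
    also have "\<dots> \<le> (\<Sum>\<tau>\<in>cfgs D W. cmod (A \<sigma> \<tau>) * vnorm D W \<psi>)"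
      by (intro sum_mono mult_left_mono norm_le_vnorm[OF W]) simp_all
    finally show "\<bar>cmod (mapply D W A \<psi> \<sigma>)\<bar> \<le> (\<Sum>\<tau>\<in>cfgs D W. cmod (A \<sigma> \<tau>) * vnorm D W \<psi>)" .
  qed
  also have "\<dots> = (\<Sum>\<sigma>\<in>cfgs D W. \<Sum>\<tau>\<in>cfgs D W. cmod (A \<sigma> \<tau>)) * vnorm D W \<psi>"
    by (simp add: sum_distrib_right)
  finally show ?thesis .
qed

lemma bdd_above_vnorm_mapply:
  assumes W: "finite W"
  shows "bdd_above {vnorm D W (mapply D W A \<psi>) | \<psi>. vnorm D W \<psi> \<le> 1}"
proof (rule bdd_aboveI)
  let ?K = "\<Sum>\<sigma>\<in>cfgs D W. \<Sum>\<tau>\<in>cfgs D W. cmod (A \<sigma> \<tau>)"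
  fix x assume "x \<in> {vnorm D W (mapply D W A \<psi>) | \<psi>. vnorm D W \<psi> \<le> 1}"
  then obtain \<psi> where "x = vnorm D W (mapply D W A \<psi>)" "vnorm D W \<psi> \<le> 1" by blast
  moreover have "0 \<le> ?K" by (simp add: sum_nonneg)
  ultimately show "x \<le> ?K"
    using vnorm_mapply_le_entry_sum[OF W, of D A \<psi>] by (meson mult_left_le order_trans)
qed

lemma vnorm_mapply_le_opnorm_unit:
  "finite W \<Longrightarrow> vnorm D W \<psi> \<le> 1 \<Longrightarrow> vnorm D W (mapply D W A \<psi>) \<le> opnorm D W A"
  unfolding opnorm_eq_Sup_vnorm by (rule cSup_upper) (auto intro: bdd_above_vnorm_mapply)

lemma opnorm_nonneg: "finite W \<Longrightarrow> 0 \<le> opnorm D W A"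
  using vnorm_mapply_le_opnorm_unit[of W D "\<lambda>_. 0" A] vnorm_nonneg[of D W "mapply D W A (\<lambda>_. 0)"]
  by simp

lemma vnorm_mapply_le:
  assumes W: "finite W"
  shows "vnorm D W (mapply D W A \<psi>) \<le> opnorm D W A * vnorm D W \<psi>"
proof (cases "vnorm D W \<psi> = 0")
  case True
  then have "\<psi> \<sigma> = 0" if "\<sigma> \<in> cfgs D W" for \<sigma>
    using norm_le_vnorm[OF W that, of \<psi>] by simp
  then have "vnorm D W (mapply D W A \<psi>) = 0"
    by (simp add: mapply_def vnorm_def L2_set_0')
  then show ?thesis using True by simp
next
  case False
  define r where "r = vnorm D W \<psi>"
  have r: "r > 0" using False vnorm_nonneg[of D W \<psi>] by (simp add: r_def)
  have "vnorm D W (\<lambda>\<sigma>. complex_of_real (1 / r) * \<psi> \<sigma>) = 1"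
    by (subst vnorm_mult) (use r in \<open>simp add: norm_divide r_def\<close>)
  then have "vnorm D W (mapply D W A (\<lambda>\<sigma>. complex_of_real (1 / r) * \<psi> \<sigma>)) \<le> opnorm D W A"
    by (intro vnorm_mapply_le_opnorm_unit[OF W]) simp
  moreover have "vnorm D W (mapply D W A (\<lambda>\<sigma>. complex_of_real (1 / r) * \<psi> \<sigma>)) = vnorm D W (mapply D W A \<psi>) / r"
    unfolding mapply_mult vnorm_mult using r by (simp add: norm_divide)
  ultimately show ?thesis
    using r by (simp add: divide_le_eq mult.commute r_def)
qed

lemma opnorm_le:
  assumes "0 \<le> K" "\<And>\<psi>. vnorm D W (mapply D W A \<psi>) \<le> K * vnorm D W \<psi>"
  shows "opnorm D W A \<le> K"
  unfolding opnorm_eq_Sup_vnorm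
proof (rule cSup_least)
  have "vnorm D W (\<lambda>_. 0) \<le> 1" by simp
  then show "{vnorm D W (mapply D W A \<psi>) | \<psi>. vnorm D W \<psi> \<le> 1} \<noteq> {}" by blast
  fix x assume "x \<in> {vnorm D W (mapply D W A \<psi>) | \<psi>. vnorm D W \<psi> \<le> 1}"
  then obtain \<psi> where "x = vnorm D W (mapply D W A \<psi>)" "vnorm D W \<psi> \<le> 1" by blast
  then show "x \<le> K" using assms(1) assms(2)[of \<psi>] by (meson mult_left_le order_trans)
qed

lemma opnorm_cong:
  "(\<And>\<sigma> \<tau>. \<sigma> \<in> cfgs D W \<Longrightarrow> \<tau> \<in> cfgs D W \<Longrightarrow> A \<sigma> \<tau> = B \<sigma> \<tau>) \<Longrightarrow> opnorm D W A = opnorm D W B"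
proof -
  assume "\<And>\<sigma> \<tau>. \<sigma> \<in> cfgs D W \<Longrightarrow> \<tau> \<in> cfgs D W \<Longrightarrow> A \<sigma> \<tau> = B \<sigma> \<tau>"
  then have "vnorm D W (mapply D W A \<psi>) = vnorm D W (mapply D W B \<psi>)" for \<psi>
    by (intro vnorm_cong) (simp add: mapply_def)
  then show ?thesis unfolding opnorm_eq_Sup_vnorm by simp
qed

lemma opnorm_eq_0:
  assumes W: "finite W" and "\<And>\<sigma> \<tau>. \<sigma> \<in> cfgs D W \<Longrightarrow> \<tau> \<in> cfgs D W \<Longrightarrow> A \<sigma> \<tau> = 0"
  shows "opnorm D W A = 0"
proof -
  have "opnorm D W A = opnorm D W (\<lambda>_ _. 0)" by (rule opnorm_cong) (use assms in auto)
  also have "\<dots> \<le> 0" by (rule opnorm_le) (auto simp: mapply_def)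
  finally show ?thesis using opnorm_nonneg[OF W, of D A] by linarith
qed

lemma opnorm_add_le:
  assumes W: "finite W"
  shows "opnorm D W (\<lambda>\<sigma> \<tau>. A \<sigma> \<tau> + B \<sigma> \<tau>) \<le> opnorm D W A + opnorm D W B"
proof (rule opnorm_le)
  show "0 \<le> opnorm D W A + opnorm D W B" using opnorm_nonneg[OF W] by (simp add: add_nonneg_nonneg)
  fix \<psi>
  have "mapply D W (\<lambda>\<sigma> \<tau>. A \<sigma> \<tau> + B \<sigma> \<tau>) \<psi> = (\<lambda>\<sigma>. mapply D W A \<psi> \<sigma> + mapply D W B \<psi> \<sigma>)"
    by (simp add: mapply_def distrib_right sum.distrib)
  then have "vnorm D W (mapply D W (\<lambda>\<sigma> \<tau>. A \<sigma> \<tau> + B \<sigma> \<tau>) \<psi>)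
      \<le> vnorm D W (mapply D W A \<psi>) + vnorm D W (mapply D W B \<psi>)"
    by (simp add: vnorm_add_le)
  also have "\<dots> \<le> (opnorm D W A + opnorm D W B) * vnorm D W \<psi>"
    unfolding distrib_right by (intro add_mono vnorm_mapply_le[OF W])
  finally show "vnorm D W (mapply D W (\<lambda>\<sigma> \<tau>. A \<sigma> \<tau> + B \<sigma> \<tau>) \<psi>) \<le> (opnorm D W A + opnorm D W B) * vnorm D W \<psi>" .
qed

lemma opnorm_mult_le:
  assumes W: "finite W"
  shows "opnorm D W (\<lambda>\<sigma> \<tau>. c * A \<sigma> \<tau>) \<le> cmod c * opnorm D W A"
proof (rule opnorm_le)
  show "0 \<le> cmod c * opnorm D W A" using opnorm_nonneg[OF W] by simp
  fix \<psi>
  have "mapply D W (\<lambda>\<sigma> \<tau>. c * A \<sigma> \<tau>) \<psi> = (\<lambda>\<sigma>. c * mapply D W A \<psi> \<sigma>)"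
    by (simp add: mapply_def sum_distrib_left mult.assoc)
  then show "vnorm D W (mapply D W (\<lambda>\<sigma> \<tau>. c * A \<sigma> \<tau>) \<psi>) \<le> cmod c * opnorm D W A * vnorm D W \<psi>"
    using vnorm_mapply_le[OF W, of D A \<psi>] by (simp add: vnorm_mult mult.assoc mult_left_mono)
qed

lemma opnorm_diff_le:
  assumes W: "finite W"
  shows "opnorm D W (\<lambda>\<sigma> \<tau>. A \<sigma> \<tau> - B \<sigma> \<tau>) \<le> opnorm D W A + opnorm D W B"
  using opnorm_add_le[OF W, of D A "\<lambda>\<sigma> \<tau>. (-1) * B \<sigma> \<tau>"] opnorm_mult_le[OF W, of D "-1" B]
  by simp

lemma opnorm_mmul_le:
  assumes W: "finite W"
  shows "opnorm D W (mmul D W A B) \<le> opnorm D W A * opnorm D W B"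
proof (rule opnorm_le)
  show "0 \<le> opnorm D W A * opnorm D W B" using opnorm_nonneg[OF W] by simp
  fix \<psi>
  have "vnorm D W (mapply D W A (mapply D W B \<psi>)) \<le> opnorm D W A * vnorm D W (mapply D W B \<psi>)"
    by (rule vnorm_mapply_le[OF W])
  also have "\<dots> \<le> opnorm D W A * (opnorm D W B * vnorm D W \<psi>)"
    by (intro mult_left_mono vnorm_mapply_le[OF W] opnorm_nonneg[OF W])
  finally show "vnorm D W (mapply D W (mmul D W A B) \<psi>) \<le> opnorm D W A * opnorm D W B * vnorm D W \<psi>"
    by (simp add: mapply_mmul mult.assoc)
qed

lemma opnorm_sum_le:
  assumes W: "finite W"
  shows "opnorm D W (\<lambda>\<sigma> \<tau>. \<Sum>i\<in>I. A i \<sigma> \<tau>) \<le> (\<Sum>i\<in>I. opnorm D W (A i))"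
proof (induction I rule: infinite_finite_induct)
  case (insert i I)
  then show ?case
    using opnorm_add_le[OF W, of D "A i" "\<lambda>\<sigma> \<tau>. \<Sum>i\<in>I. A i \<sigma> \<tau>"] by simp
qed (use opnorm_eq_0[OF W, of D "\<lambda>_ _. 0"] in simp_all)

text \<open>Operator norms are lower semicontinuous under entrywise convergence.\<close>
lemma opnorm_sums_le:
  assumes W: "finite W"
    and sums: "\<And>\<sigma> \<tau>. \<sigma> \<in> cfgs D W \<Longrightarrow> \<tau> \<in> cfgs D W \<Longrightarrow> (\<lambda>n. F n \<sigma> \<tau>) sums G \<sigma> \<tau>"
    and bound: "\<And>n. opnorm D W (F n) \<le> b n" and b: "b sums \<beta>"
  shows "opnorm D W G \<le> \<beta>"
proof -
  have b_nonneg: "0 \<le> b n" for n using bound[of n] opnorm_nonneg[OF W, of D "F n"] by linarith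
  have partial: "opnorm D W (\<lambda>\<sigma> \<tau>. \<Sum>n<N. F n \<sigma> \<tau>) \<le> \<beta>" for N
  proof -
    have "opnorm D W (\<lambda>\<sigma> \<tau>. \<Sum>n<N. F n \<sigma> \<tau>) \<le> (\<Sum>n<N. b n)"
      using opnorm_sum_le[OF W, of D "F" "{..<N}"] sum_mono[of "{..<N}" "\<lambda>n. opnorm D W (F n)" b] bound
      by (meson order_trans)
    also have "\<dots> \<le> \<beta>"
      using sum_le_suminf[of b "{..<N}"] b b_nonneg by (simp add: sums_iff)
    finally show ?thesis .
  qed
  show ?thesis
  proof (rule opnorm_le)
    show "0 \<le> \<beta>" using partial[of 0] opnorm_nonneg[OF W, of D] by (meson order_trans)
    fix \<psi>
    let ?S = "\<lambda>N. \<lambda>\<sigma> \<tau>. \<Sum>n<N. F n \<sigma> \<tau>"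
    have "(\<lambda>N. mapply D W (?S N) \<psi> \<sigma>) \<longlonglongrightarrow> mapply D W G \<psi> \<sigma>" if "\<sigma> \<in> cfgs D W" for \<sigma>
      unfolding mapply_def
      by (intro tendsto_sum tendsto_mult_right) (use sums[OF that] in \<open>simp add: sums_def\<close>)
    then have lim: "(\<lambda>N. vnorm D W (mapply D W (?S N) \<psi>)) \<longlonglongrightarrow> vnorm D W (mapply D W G \<psi>)"
      unfolding vnorm_def L2_set_def by (intro tendsto_real_sqrt tendsto_sum tendsto_power tendsto_norm)
    have "vnorm D W (mapply D W (?S N) \<psi>) \<le> \<beta> * vnorm D W \<psi>" for N
      using vnorm_mapply_le[OF W, of D "?S N" \<psi>] partial[of N] vnorm_nonneg[of D W \<psi>]
      by (meson mult_right_mono order_trans)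
    then show "vnorm D W (mapply D W G \<psi>) \<le> \<beta> * vnorm D W \<psi>"
      by (intro LIMSEQ_le_const2[OF lim]) blast
  qed
qed

section \<open>Embedded operators, supports and commutators\<close>

lemma mmul_cong:
  assumes "\<And>\<sigma> \<tau>. \<sigma> \<in> cfgs D W \<Longrightarrow> \<tau> \<in> cfgs D W \<Longrightarrow> A \<sigma> \<tau> = A' \<sigma> \<tau>"
    and "\<And>\<sigma> \<tau>. \<sigma> \<in> cfgs D W \<Longrightarrow> \<tau> \<in> cfgs D W \<Longrightarrow> B \<sigma> \<tau> = B' \<sigma> \<tau>"
    and "\<sigma> \<in> cfgs D W" "\<tau> \<in> cfgs D W"
  shows "mmul D W A B \<sigma> \<tau> = mmul D W A' B' \<sigma> \<tau>"
  unfolding mmul_def using assms by (intro sum.cong refl) simp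

lemma mapply_emb:
  assumes W: "finite W" and X: "X \<subseteq> W" and \<sigma>: "\<sigma> \<in> cfgs D W"
  shows "mapply D W (emb X A) \<psi> \<sigma> = mapply D X A (\<lambda>\<alpha>. \<psi> (join_cfg \<alpha> (restr (W - X) \<sigma>))) (restr X \<sigma>)"
proof -
  have "mapply D W (emb X A) \<psi> \<sigma> = (\<Sum>\<rho>\<in>cfgs D W. if \<forall>v. v \<notin> X \<longrightarrow> \<sigma> v = \<rho> v
            then A (restr X \<sigma>) (restr X \<rho>) * \<psi> \<rho> else 0)"
    unfolding mapply_def emb_def by (intro sum.cong refl) auto
  also have "\<dots> = mapply D X A (\<lambda>\<alpha>. \<psi> (join_cfg \<alpha> (restr (W - X) \<sigma>))) (restr X \<sigma>)"
    unfolding sum_cfgs_agree_outside[OF W X \<sigma>] mapply_def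
    by (intro sum.cong refl) (simp add: restr_join_cfg_left[OF _ restr_Diff_in_cfgs[OF \<sigma>]])
  finally show ?thesis .
qed

text \<open>On each slice of configurations that agree outside \<open>X\<close>, \<open>emb X A\<close> acts as \<open>A\<close>.\<close>
lemma opnorm_emb_le:
  assumes W: "finite W" and X: "X \<subseteq> W"
  shows "opnorm D W (emb X A) \<le> opnorm D X A"
proof (rule opnorm_le)
  have fX: "finite X" using W X finite_subset by blast
  show "0 \<le> opnorm D X A" by (rule opnorm_nonneg[OF fX])
  fix \<psi> :: "'a cfg \<Rightarrow> complex"
  let ?K = "opnorm D X A" and ?slice = "\<lambda>\<beta> \<alpha>. \<psi> (join_cfg \<alpha> \<beta>)"
  have "(vnorm D W (mapply D W (emb X A) \<psi>))\<^sup>2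
      = (\<Sum>\<beta>\<in>cfgs D (W - X). \<Sum>\<alpha>\<in>cfgs D X. (cmod (mapply D W (emb X A) \<psi> (join_cfg \<alpha> \<beta>)))\<^sup>2)"
    unfolding vnorm_sq by (rule sum_cfgs_split[OF W X])
  also have "\<dots> = (\<Sum>\<beta>\<in>cfgs D (W - X). (vnorm D X (mapply D X A (?slice \<beta>)))\<^sup>2)"
    unfolding vnorm_sq
    by (intro sum.cong refl) (simp add: mapply_emb[OF W X] join_cfg_in_cfgs X
        restr_join_cfg_left restr_join_cfg_right)
  also have "\<dots> \<le> (\<Sum>\<beta>\<in>cfgs D (W - X). (?K * vnorm D X (?slice \<beta>))\<^sup>2)"
    by (intro sum_mono power_mono vnorm_mapply_le[OF fX] vnorm_nonneg)
  also have "\<dots> = (?K * vnorm D W \<psi>)\<^sup>2"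
    by (simp add: power_mult_distrib sum_distrib_left vnorm_sq sum_cfgs_split[OF W X])
  finally show "vnorm D W (mapply D W (emb X A) \<psi>) \<le> ?K * vnorm D W \<psi>"
    by (rule power2_le_imp_le) (simp add: opnorm_nonneg[OF fX] vnorm_nonneg)
qed

lemma emb_emb:
  assumes "S \<subseteq> S'"
  shows "emb S' (emb S f) = emb S f"
proof (intro ext)
  fix \<sigma> \<tau> :: "'a cfg"
  have "restr S (restr S' \<rho>) = restr S \<rho>" for \<rho> :: "'a cfg"
    using assms by (auto simp: restr_def fun_eq_iff)
  moreover have "((\<forall>v. v \<notin> S' \<longrightarrow> \<sigma> v = \<tau> v) \<and> (\<forall>v. v \<notin> S \<longrightarrow> restr S' \<sigma> v = restr S' \<tau> v))
      \<longleftrightarrow> (\<forall>v. v \<notin> S \<longrightarrow> \<sigma> v = \<tau> v)"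
    using assms by (auto simp: restr_def)
  ultimately show "emb S' (emb S f) \<sigma> \<tau> = emb S f \<sigma> \<tau>"
    unfolding emb_def by auto
qed

definition supported :: "nat \<Rightarrow> 'v set \<Rightarrow> 'v set \<Rightarrow> 'v mat \<Rightarrow> bool" where
  "supported D W S B \<longleftrightarrow> (\<exists>f. \<forall>\<sigma>\<in>cfgs D W. \<forall>\<tau>\<in>cfgs D W. B \<sigma> \<tau> = emb S f \<sigma> \<tau>)"

lemma supported_emb: "supported D W S (emb S f)"
  unfolding supported_def by blast

lemma supported_mono: "S \<subseteq> S' \<Longrightarrow> supported D W S B \<Longrightarrow> supported D W S' B"
  unfolding supported_def by (metis emb_emb)

lemma supported_diff:
  assumes "supported D W S A" "supported D W S B"
  shows "supported D W S (\<lambda>\<sigma> \<tau>. A \<sigma> \<tau> - B \<sigma> \<tau>)"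
proof -
  obtain f g where "\<forall>\<sigma>\<in>cfgs D W. \<forall>\<tau>\<in>cfgs D W. A \<sigma> \<tau> = emb S f \<sigma> \<tau>"
    and "\<forall>\<sigma>\<in>cfgs D W. \<forall>\<tau>\<in>cfgs D W. B \<sigma> \<tau> = emb S g \<sigma> \<tau>"
    using assms unfolding supported_def by blast
  then have "\<forall>\<sigma>\<in>cfgs D W. \<forall>\<tau>\<in>cfgs D W. A \<sigma> \<tau> - B \<sigma> \<tau> = emb S (\<lambda>x y. f x y - g x y) \<sigma> \<tau>"
    unfolding emb_def by auto
  then show ?thesis unfolding supported_def by blast
qed

lemma mmul_emb_emb:
  assumes W: "finite W" and S: "S \<subseteq> W" and \<sigma>: "\<sigma> \<in> cfgs D W"
  shows "mmul D W (emb S f) (emb S g) \<sigma> \<tau> = emb S (\<lambda>x y. \<Sum>\<alpha>\<in>cfgs D S. f x \<alpha> * g \<alpha> y) \<sigma> \<tau>"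
proof -
  let ?r = "restr (W - S) \<sigma>"
  have outside: "join_cfg \<alpha> ?r v = \<sigma> v" if "\<alpha> \<in> cfgs D S" "v \<notin> S" for \<alpha> v
    using that \<sigma> by (auto simp: cfgs_def join_cfg_def restr_def)
  have "mmul D W (emb S f) (emb S g) \<sigma> \<tau> = (\<Sum>\<rho>\<in>cfgs D W. if \<forall>v. v \<notin> S \<longrightarrow> \<sigma> v = \<rho> v
           then f (restr S \<sigma>) (restr S \<rho>) * emb S g \<rho> \<tau> else 0)"
    unfolding mmul_def by (intro sum.cong refl) (auto simp: emb_def[of S f])
  also have "\<dots> = (\<Sum>\<alpha>\<in>cfgs D S. if \<forall>v. v \<notin> S \<longrightarrow> \<sigma> v = \<tau> v
           then f (restr S \<sigma>) \<alpha> * g \<alpha> (restr S \<tau>) else 0)"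
    unfolding sum_cfgs_agree_outside[OF W S \<sigma>]
    by (intro sum.cong refl) (auto simp: emb_def outside restr_join_cfg_left[OF _ restr_Diff_in_cfgs[OF \<sigma>]])
  also have "\<dots> = emb S (\<lambda>x y. \<Sum>\<alpha>\<in>cfgs D S. f x \<alpha> * g \<alpha> y) \<sigma> \<tau>"
  proof (cases "\<forall>v. v \<notin> S \<longrightarrow> \<sigma> v = \<tau> v")
    case False
    then show ?thesis by (simp only: emb_def if_not_P[OF False] if_False sum.neutral_const)
  qed (simp add: emb_def)
  finally show ?thesis .
qed

lemma supported_mmul:
  assumes W: "finite W" and S: "S \<subseteq> W" and T: "T \<subseteq> W"
    and A: "supported D W S A" and B: "supported D W T B"
  shows "supported D W (S \<union> T) (mmul D W A B)"
proof -
  obtain f g where f: "\<forall>\<sigma>\<in>cfgs D W. \<forall>\<tau>\<in>cfgs D W. A \<sigma> \<tau> = emb (S \<union> T) f \<sigma> \<tau>"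
    and g: "\<forall>\<sigma>\<in>cfgs D W. \<forall>\<tau>\<in>cfgs D W. B \<sigma> \<tau> = emb (S \<union> T) g \<sigma> \<tau>"
    using supported_mono[OF _ A, of "S \<union> T"] supported_mono[OF _ B, of "S \<union> T"]
    unfolding supported_def by blast
  have "mmul D W A B \<sigma> \<tau> = emb (S \<union> T) (\<lambda>x y. \<Sum>\<alpha>\<in>cfgs D (S \<union> T). f x \<alpha> * g \<alpha> y) \<sigma> \<tau>"
    if "\<sigma> \<in> cfgs D W" "\<tau> \<in> cfgs D W" for \<sigma> \<tau>
  proof -
    have "mmul D W A B \<sigma> \<tau> = mmul D W (emb (S \<union> T) f) (emb (S \<union> T) g) \<sigma> \<tau>"
      by (rule mmul_cong[OF _ _ that]) (use f g in auto)
    also have "\<dots> = emb (S \<union> T) (\<lambda>x y. \<Sum>\<alpha>\<in>cfgs D (S \<union> T). f x \<alpha> * g \<alpha> y) \<sigma> \<tau>"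
      by (rule mmul_emb_emb[OF W _ that(1)]) (use S T in auto)
    finally show ?thesis .
  qed
  then show ?thesis unfolding supported_def by blast
qed

text \<open>For disjoint supports the only intermediate configuration that contributes agrees with
  \<open>\<tau>\<close> on \<open>S\<close> and with \<open>\<sigma>\<close> elsewhere.\<close>
lemma mmul_emb_emb_disjoint:
  assumes ST: "S \<inter> T = {}" and W: "finite W" and \<sigma>: "\<sigma> \<in> cfgs D W" and \<tau>: "\<tau> \<in> cfgs D W"
  shows "mmul D W (emb S f) (emb T g) \<sigma> \<tau> = (if \<forall>v. v \<notin> S \<union> T \<longrightarrow> \<sigma> v = \<tau> v
           then f (restr S \<sigma>) (restr S \<tau>) * g (restr T \<sigma>) (restr T \<tau>) else 0)"
proof -
  define \<rho>\<^sub>0 where "\<rho>\<^sub>0 = (\<lambda>v. if v \<in> S then \<tau> v else \<sigma> v)"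
  have \<rho>\<^sub>0: "\<rho>\<^sub>0 \<in> cfgs D W" using \<sigma> \<tau> by (auto simp: cfgs_def \<rho>\<^sub>0_def)
  have zero: "emb S f \<sigma> \<rho> * emb T g \<rho> \<tau> = 0" if ne: "\<rho> \<noteq> \<rho>\<^sub>0" for \<rho>
  proof -
    obtain v where v: "\<rho> v \<noteq> \<rho>\<^sub>0 v" using ne by (auto simp: fun_eq_iff)
    show ?thesis
    proof (cases "v \<in> S")
      case True
      then have "\<not> (\<forall>v. v \<notin> T \<longrightarrow> \<rho> v = \<tau> v)" using v ST by (auto simp: \<rho>\<^sub>0_def)
      then show ?thesis by (simp only: emb_def[of T] if_not_P if_False mult_zero_right)
    next
      case False
      then have "\<not> (\<forall>v. v \<notin> S \<longrightarrow> \<sigma> v = \<rho> v)" using v by (auto simp: \<rho>\<^sub>0_def)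
      then show ?thesis by (simp only: emb_def[of S] if_not_P if_False mult_zero_left)
    qed
  qed
  have "mmul D W (emb S f) (emb T g) \<sigma> \<tau>
      = (\<Sum>\<rho>\<in>cfgs D W. if \<rho> = \<rho>\<^sub>0 then emb S f \<sigma> \<rho> * emb T g \<rho> \<tau> else 0)"
    unfolding mmul_def using zero by (intro sum.cong) auto
  also have "\<dots> = emb S f \<sigma> \<rho>\<^sub>0 * emb T g \<rho>\<^sub>0 \<tau>"
    using W \<rho>\<^sub>0 by (simp add: finite_cfgs)
  also have "emb S f \<sigma> \<rho>\<^sub>0 = f (restr S \<sigma>) (restr S \<tau>)"
  proof -
    have "restr S \<rho>\<^sub>0 = restr S \<tau>" by (rule ext) (simp add: restr_def \<rho>\<^sub>0_def)
    then show ?thesis unfolding emb_def by (simp add: \<rho>\<^sub>0_def)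
  qed
  also have "emb T g \<rho>\<^sub>0 \<tau> = (if \<forall>v. v \<notin> S \<union> T \<longrightarrow> \<sigma> v = \<tau> v then g (restr T \<sigma>) (restr T \<tau>) else 0)"
  proof -
    have "restr T \<rho>\<^sub>0 = restr T \<sigma>"
      using ST by (intro ext) (auto simp: restr_def \<rho>\<^sub>0_def)
    moreover have "(\<forall>v. v \<notin> T \<longrightarrow> \<rho>\<^sub>0 v = \<tau> v) \<longleftrightarrow> (\<forall>v. v \<notin> S \<union> T \<longrightarrow> \<sigma> v = \<tau> v)"
      by (auto simp: \<rho>\<^sub>0_def)
    ultimately show ?thesis by (simp only: emb_def)
  qed
  finally show ?thesis
    by (simp only: if_distrib[where f = "times (f (restr S \<sigma>) (restr S \<tau>))"] mult_zero_right)
qed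

lemma mmul_commute_disjoint:
  assumes ST: "S \<inter> T = {}" and W: "finite W"
    and A: "supported D W S A" and B: "supported D W T B" and \<sigma>: "\<sigma> \<in> cfgs D W" and \<tau>: "\<tau> \<in> cfgs D W"
  shows "mmul D W A B \<sigma> \<tau> = mmul D W B A \<sigma> \<tau>"
proof -
  obtain f g where f: "\<forall>\<sigma>\<in>cfgs D W. \<forall>\<tau>\<in>cfgs D W. A \<sigma> \<tau> = emb S f \<sigma> \<tau>"
    and g: "\<forall>\<sigma>\<in>cfgs D W. \<forall>\<tau>\<in>cfgs D W. B \<sigma> \<tau> = emb T g \<sigma> \<tau>"
    using A B unfolding supported_def by blast
  have "mmul D W A B \<sigma> \<tau> = mmul D W (emb S f) (emb T g) \<sigma> \<tau>"
    by (rule mmul_cong[OF _ _ \<sigma> \<tau>]) (use f g in auto)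
  also have "\<dots> = mmul D W (emb T g) (emb S f) \<sigma> \<tau>"
    using mmul_emb_emb_disjoint[OF ST W \<sigma> \<tau>, of f g] mmul_emb_emb_disjoint[of T S, OF _ W \<sigma> \<tau>, of g f] ST
    by (simp only: Int_commute Un_commute[of T S] mult.commute[of "g _ _"])
  also have "\<dots> = mmul D W B A \<sigma> \<tau>"
    by (rule mmul_cong[OF _ _ \<sigma> \<tau>]) (use f g in auto)
  finally show ?thesis .
qed

definition comm :: "nat \<Rightarrow> 'v set \<Rightarrow> 'v mat \<Rightarrow> 'v mat \<Rightarrow> 'v mat" where
  "comm D W A B = (\<lambda>\<sigma> \<tau>. mmul D W A B \<sigma> \<tau> - mmul D W B A \<sigma> \<tau>)"

lemma supported_comm:
  assumes "finite W" "S \<subseteq> W" "T \<subseteq> W" "supported D W S A" "supported D W T B"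
  shows "supported D W (S \<union> T) (comm D W A B)"
  unfolding comm_def using assms by (metis supported_diff supported_mmul Un_commute)

lemma comm_eq_0_disjoint:
  assumes "S \<inter> T = {}" "finite W" "supported D W S A" "supported D W T B"
    and "\<sigma> \<in> cfgs D W" "\<tau> \<in> cfgs D W"
  shows "comm D W A B \<sigma> \<tau> = 0"
  unfolding comm_def using mmul_commute_disjoint[OF assms] by simp

lemma opnorm_comm_le:
  assumes W: "finite W"
  shows "opnorm D W (comm D W A B) \<le> 2 * opnorm D W A * opnorm D W B"
proof -
  have "opnorm D W (comm D W A B) \<le> opnorm D W (mmul D W A B) + opnorm D W (mmul D W B A)"
    unfolding comm_def by (rule opnorm_diff_le[OF W])
  also have "\<dots> \<le> opnorm D W A * opnorm D W B + opnorm D W B * opnorm D W A"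
    by (intro add_mono opnorm_mmul_le[OF W])
  finally show ?thesis by simp
qed

lemma comm_cong:
  assumes "\<And>\<sigma> \<tau>. \<sigma> \<in> cfgs D W \<Longrightarrow> \<tau> \<in> cfgs D W \<Longrightarrow> B \<sigma> \<tau> = B' \<sigma> \<tau>"
    and "\<sigma> \<in> cfgs D W" "\<tau> \<in> cfgs D W"
  shows "comm D W A B \<sigma> \<tau> = comm D W A B' \<sigma> \<tau>"
  unfolding comm_def using assms by (simp add: mmul_cong[of D W _ _ B B'] mmul_cong[of D W B B'])

lemma comm_zero [simp]: "comm D W A (\<lambda>_ _. 0) = (\<lambda>_ _. 0)"
  by (simp add: comm_def mmul_def)

lemma mmul_sum_left: "mmul D W (\<lambda>\<sigma> \<tau>. \<Sum>i\<in>I. A i \<sigma> \<tau>) B \<sigma> \<tau> = (\<Sum>i\<in>I. mmul D W (A i) B \<sigma> \<tau>)"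
  unfolding mmul_def by (simp add: sum_distrib_right sum.swap[of _ I])

lemma mmul_sum_right: "mmul D W A (\<lambda>\<sigma> \<tau>. \<Sum>i\<in>I. B i \<sigma> \<tau>) \<sigma> \<tau> = (\<Sum>i\<in>I. mmul D W A (B i) \<sigma> \<tau>)"
  unfolding mmul_def by (simp add: sum_distrib_left sum.swap[of _ I])

lemma comm_sum_left: "comm D W (\<lambda>\<sigma> \<tau>. \<Sum>i\<in>I. A i \<sigma> \<tau>) B = (\<lambda>\<sigma> \<tau>. \<Sum>i\<in>I. comm D W (A i) B \<sigma> \<tau>)"
  unfolding comm_def mmul_sum_left mmul_sum_right by (simp add: sum_subtractf)

lemma comm_sum_right: "comm D W A (\<lambda>\<sigma> \<tau>. \<Sum>i\<in>I. B i \<sigma> \<tau>) = (\<lambda>\<sigma> \<tau>. \<Sum>i\<in>I. comm D W A (B i) \<sigma> \<tau>)"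
  unfolding comm_def mmul_sum_left mmul_sum_right by (simp add: sum_subtractf)

section \<open>Nested commutators\<close>

text \<open>\<open>nested_comm D W \<Phi> B [X\<^sub>1, \<dots>, X\<^sub>n] = [\<Phi>(X\<^sub>n), \<dots>, [\<Phi>(X\<^sub>1), B]]\<close>: the head of the list is
  commuted first.\<close>
fun nested_comm :: "nat \<Rightarrow> 'v set \<Rightarrow> ('v set \<Rightarrow> 'v mat) \<Rightarrow> 'v mat \<Rightarrow> 'v set list \<Rightarrow> 'v mat" where
  "nested_comm D W \<Phi> B [] = B"
| "nested_comm D W \<Phi> B (X # Xs) = nested_comm D W \<Phi> (comm D W (emb X (\<Phi> X)) B) Xs"

fun linked :: "'v set \<Rightarrow> 'v set list \<Rightarrow> bool" where
  "linked S [] = True"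
| "linked S (X # Xs) \<longleftrightarrow> X \<inter> S \<noteq> {} \<and> linked (S \<union> X) Xs"

lemma nested_comm_cong:
  assumes "\<And>\<sigma> \<tau>. \<sigma> \<in> cfgs D W \<Longrightarrow> \<tau> \<in> cfgs D W \<Longrightarrow> B \<sigma> \<tau> = B' \<sigma> \<tau>"
    and "\<sigma> \<in> cfgs D W" "\<tau> \<in> cfgs D W"
  shows "nested_comm D W \<Phi> B Xs \<sigma> \<tau> = nested_comm D W \<Phi> B' Xs \<sigma> \<tau>"
  using assms
proof (induction Xs arbitrary: B B')
  case (Cons X Xs)
  show ?case
    unfolding nested_comm.simps
  proof (rule Cons.IH)
    show "comm D W (emb X (\<Phi> X)) B \<sigma>' \<tau>' = comm D W (emb X (\<Phi> X)) B' \<sigma>' \<tau>'"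
      if "\<sigma>' \<in> cfgs D W" "\<tau>' \<in> cfgs D W" for \<sigma>' \<tau>'
      using that Cons.prems(1) by (rule comm_cong[rotated])
  qed (use Cons.prems in auto)
qed simp

lemma nested_comm_zero: "nested_comm D W \<Phi> (\<lambda>_ _. 0) Xs = (\<lambda>_ _. 0)"
  by (induction Xs) simp_all

text \<open>Commuting with a term whose support misses everything accumulated so far gives zero.\<close>
lemma nested_comm_eq_0_if_not_linked:
  assumes W: "finite W"
  shows "S \<subseteq> W \<Longrightarrow> supported D W S B \<Longrightarrow> set Xs \<subseteq> Pow W \<Longrightarrow> \<not> linked S Xs
     \<Longrightarrow> \<sigma> \<in> cfgs D W \<Longrightarrow> \<tau> \<in> cfgs D W \<Longrightarrow> nested_comm D W \<Phi> B Xs \<sigma> \<tau> = 0"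
proof (induction Xs arbitrary: S B)
  case (Cons X Xs)
  have X: "X \<subseteq> W" using Cons.prems by auto
  show ?case
  proof (cases "X \<inter> S = {}")
    case True
    have "comm D W (emb X (\<Phi> X)) B \<sigma>' \<tau>' = 0" if "\<sigma>' \<in> cfgs D W" "\<tau>' \<in> cfgs D W" for \<sigma>' \<tau>'
      by (rule comm_eq_0_disjoint[OF True W supported_emb Cons.prems(2) that])
    then have "nested_comm D W \<Phi> B (X # Xs) \<sigma> \<tau> = nested_comm D W \<Phi> (\<lambda>_ _. 0) Xs \<sigma> \<tau>"
      unfolding nested_comm.simps by (intro nested_comm_cong) (use Cons.prems in auto)
    then show ?thesis by (simp add: nested_comm_zero)
  next
    case False
    then have "\<not> linked (S \<union> X) Xs" using Cons.prems(4) by simp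
    moreover have "supported D W (S \<union> X) (comm D W (emb X (\<Phi> X)) B)"
      using supported_comm[OF W X Cons.prems(1) supported_emb Cons.prems(2)] by (simp add: Un_commute)
    ultimately show ?thesis
      unfolding nested_comm.simps using Cons.prems X by (intro Cons.IH) auto
  qed
qed simp

lemma prod_list_opnorm_nonneg:
  "(\<And>X. X \<in> set Xs \<Longrightarrow> finite X) \<Longrightarrow> 0 \<le> (\<Prod>X\<leftarrow>Xs. opnorm D X (\<Phi> X))"
  by (rule prod_list_nonneg) (auto simp: opnorm_nonneg)

lemma opnorm_nested_comm_le:
  assumes W: "finite W"
  shows "set Xs \<subseteq> Pow W \<Longrightarrow> opnorm D W (nested_comm D W \<Phi> B Xs)
     \<le> 2 ^ length Xs * opnorm D W B * (\<Prod>X\<leftarrow>Xs. opnorm D X (\<Phi> X))"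
proof (induction Xs arbitrary: B)
  case (Cons X Xs)
  have X: "X \<subseteq> W" and fX: "finite X" using Cons.prems W finite_subset by auto
  have prod_nonneg: "0 \<le> (\<Prod>X\<leftarrow>Xs. opnorm D X (\<Phi> X))"
    using Cons.prems W by (intro prod_list_opnorm_nonneg) (auto intro: finite_subset)
  have "opnorm D W (nested_comm D W \<Phi> B (X # Xs))
      \<le> 2 ^ length Xs * opnorm D W (comm D W (emb X (\<Phi> X)) B) * (\<Prod>X\<leftarrow>Xs. opnorm D X (\<Phi> X))"
    using Cons.IH Cons.prems by simp
  also have "\<dots> \<le> 2 ^ length Xs * (2 * opnorm D W (emb X (\<Phi> X)) * opnorm D W B) * (\<Prod>X\<leftarrow>Xs. opnorm D X (\<Phi> X))"
    by (intro mult_right_mono mult_left_mono opnorm_comm_le[OF W] prod_nonneg) simp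
  also have "\<dots> \<le> 2 ^ length Xs * (2 * opnorm D X (\<Phi> X) * opnorm D W B) * (\<Prod>X\<leftarrow>Xs. opnorm D X (\<Phi> X))"
    by (intro mult_right_mono mult_left_mono opnorm_emb_le[OF W X] opnorm_nonneg[OF W] prod_nonneg) simp_all
  finally show ?case by (simp add: mult_ac)
qed simp

lemma opnorm_sum_nested_comm_le:
  fixes Q :: "'v mat"
  assumes W: "finite W" and Z: "Z \<subseteq> W"
    and Xss: "\<And>Xs. Xs \<in> \<X> \<Longrightarrow> set Xs \<subseteq> Pow W \<and> length Xs = n"
  shows "opnorm D W (\<lambda>\<sigma> \<tau>. \<Sum>Xs\<in>\<X>. nested_comm D W \<Phi> (emb Z Q) Xs \<sigma> \<tau>)
     \<le> (\<Sum>Xs\<in>\<X>. if linked Z Xs then 2 ^ n * opnorm D Z Q * (\<Prod>X\<leftarrow>Xs. opnorm D X (\<Phi> X)) else 0)"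
proof -
  have fZ: "finite Z" using W Z finite_subset by blast
  have "opnorm D W (nested_comm D W \<Phi> (emb Z Q) Xs)
      \<le> (if linked Z Xs then 2 ^ n * opnorm D Z Q * (\<Prod>X\<leftarrow>Xs. opnorm D X (\<Phi> X)) else 0)"
    if Xs: "Xs \<in> \<X>" for Xs
  proof (cases "linked Z Xs")
    case True
    have "0 \<le> (\<Prod>X\<leftarrow>Xs. opnorm D X (\<Phi> X))"
      using Xss[OF Xs] W by (intro prod_list_opnorm_nonneg) (auto intro: finite_subset)
    moreover have "opnorm D W (nested_comm D W \<Phi> (emb Z Q) Xs)
        \<le> 2 ^ n * opnorm D W (emb Z Q) * (\<Prod>X\<leftarrow>Xs. opnorm D X (\<Phi> X))"
      using opnorm_nested_comm_le[OF W, of Xs D \<Phi> "emb Z Q"] Xss[OF Xs] by simp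
    ultimately have "opnorm D W (nested_comm D W \<Phi> (emb Z Q) Xs)
        \<le> 2 ^ n * opnorm D Z Q * (\<Prod>X\<leftarrow>Xs. opnorm D X (\<Phi> X))"
      by (meson order_trans mult_right_mono mult_left_mono opnorm_emb_le[OF W Z] zero_le_power zero_le_numeral)
    with True show ?thesis by simp
  next
    case False
    have "opnorm D W (nested_comm D W \<Phi> (emb Z Q) Xs) = 0"
      using nested_comm_eq_0_if_not_linked[OF W Z supported_emb _ False] Xss[OF Xs]
      by (intro opnorm_eq_0[OF W]) auto
    then show ?thesis using False by simp
  qed
  then show ?thesis
    using opnorm_sum_le[OF W, of D "\<lambda>Xs. nested_comm D W \<Phi> (emb Z Q) Xs" \<X>] sum_mono
    by (meson order_trans)
qed

lemma funpow_comm_sum: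
  "(comm D W H ^^ n) (\<lambda>\<sigma> \<tau>. \<Sum>i\<in>I. B i \<sigma> \<tau>) = (\<lambda>\<sigma> \<tau>. \<Sum>i\<in>I. (comm D W H ^^ n) (B i) \<sigma> \<tau>)"
  by (induction n) (simp_all add: comm_sum_right)

lemma sum_lists_length_Suc:
  assumes "finite A"
  shows "(\<Sum>Xs\<in>{Xs. set Xs \<subseteq> A \<and> length Xs = Suc n}. f Xs)
       = (\<Sum>X\<in>A. \<Sum>Xs\<in>{Xs. set Xs \<subseteq> A \<and> length Xs = n}. f (X # Xs))"
proof -
  let ?L = "{Xs. set Xs \<subseteq> A \<and> length Xs = n}"
  have "inj_on (\<lambda>(Xs, X). X # Xs) (?L \<times> A)" by (auto simp: inj_on_def)
  then have "(\<Sum>Xs\<in>{Xs. set Xs \<subseteq> A \<and> length Xs = Suc n}. f Xs) = (\<Sum>(Xs, X)\<in>?L \<times> A. f (X # Xs))"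
    unfolding lists_length_Suc_eq by (subst sum.reindex) (simp_all add: split_def)
  also have "\<dots> = (\<Sum>X\<in>A. \<Sum>Xs\<in>?L. f (X # Xs))"
    by (subst sum.cartesian_product[symmetric]) (rule sum.swap)
  finally show ?thesis .
qed

lemma funpow_comm_ham:
  assumes Y: "finite Y"
  shows "(comm D W (ham \<Phi> Y) ^^ n) B
       = (\<lambda>\<sigma> \<tau>. \<Sum>Xs\<in>{Xs. set Xs \<subseteq> Pow Y \<and> length Xs = n}. nested_comm D W \<Phi> B Xs \<sigma> \<tau>)"
proof (induction n arbitrary: B)
  case 0
  have "{Xs. set Xs \<subseteq> Pow Y \<and> length Xs = 0} = {[]}" by auto
  then show ?case by simp
next
  case (Suc n)
  have "(comm D W (ham \<Phi> Y) ^^ Suc n) B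
      = (comm D W (ham \<Phi> Y) ^^ n) (\<lambda>\<sigma> \<tau>. \<Sum>X\<in>Pow Y. comm D W (emb X (\<Phi> X)) B \<sigma> \<tau>)"
    by (simp add: funpow_Suc_right ham_def comm_sum_left del: funpow.simps)
  also have "\<dots> = (\<lambda>\<sigma> \<tau>. \<Sum>X\<in>Pow Y. \<Sum>Xs\<in>{Xs. set Xs \<subseteq> Pow Y \<and> length Xs = n}.
                      nested_comm D W \<Phi> B (X # Xs) \<sigma> \<tau>)"
    by (simp add: funpow_comm_sum Suc.IH)
  also have "\<dots> = (\<lambda>\<sigma> \<tau>. \<Sum>Xs\<in>{Xs. set Xs \<subseteq> Pow Y \<and> length Xs = Suc n}. nested_comm D W \<Phi> B Xs \<sigma> \<tau>)"
    using Y by (simp add: sum_lists_length_Suc)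
  finally show ?case .
qed

section \<open>The commutator series of the dynamics\<close>

lemma mmul_assoc: "mmul D W A (mmul D W B C) = mmul D W (mmul D W A B) C"
proof (intro ext)
  fix \<sigma> \<tau>
  have "mmul D W A (mmul D W B C) \<sigma> \<tau> = (\<Sum>\<rho>\<in>cfgs D W. \<Sum>\<rho>'\<in>cfgs D W. A \<sigma> \<rho> * B \<rho> \<rho>' * C \<rho>' \<tau>)"
    by (simp add: mmul_def sum_distrib_left mult.assoc)
  also have "\<dots> = mmul D W (mmul D W A B) C \<sigma> \<tau>"
    by (subst sum.swap) (simp add: mmul_def sum_distrib_right)
  finally show "mmul D W A (mmul D W B C) \<sigma> \<tau> = mmul D W (mmul D W A B) C \<sigma> \<tau>" .
qed

lemma mmul_lincomb_left:
  "mmul D W (\<lambda>\<sigma> \<tau>. \<Sum>i\<in>I. c i * A i \<sigma> \<tau>) B \<sigma> \<tau> = (\<Sum>i\<in>I. c i * mmul D W (A i) B \<sigma> \<tau>)"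
  unfolding mmul_def by (simp add: sum_distrib_left sum_distrib_right sum.swap[of _ I] mult.assoc)

lemma mmul_lincomb_right:
  "mmul D W A (\<lambda>\<sigma> \<tau>. \<Sum>i\<in>I. c i * B i \<sigma> \<tau>) \<sigma> \<tau> = (\<Sum>i\<in>I. c i * mmul D W A (B i) \<sigma> \<tau>)"
  unfolding mmul_def by (simp add: sum_distrib_left sum.swap[of _ I] mult.left_commute)

lemma mmul_mone_left: "finite W \<Longrightarrow> \<sigma> \<in> cfgs D W \<Longrightarrow> mmul D W mone A \<sigma> \<tau> = A \<sigma> \<tau>"
  by (simp add: mmul_def mone_def finite_cfgs if_distrib[where f = "\<lambda>x. x * _"] cong: if_cong)

lemma mmul_mone_right: "finite W \<Longrightarrow> \<tau> \<in> cfgs D W \<Longrightarrow> mmul D W A mone \<sigma> \<tau> = A \<sigma> \<tau>"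
  by (simp add: mmul_def mone_def finite_cfgs if_distrib[where f = "\<lambda>x. _ * x"] eq_commute[of _ \<tau>] cong: if_cong)

text \<open>Only on configurations: outside \<open>cfgs D W\<close>, \<open>mone\<close> is no unit for \<open>mmul\<close>.\<close>
lemma mmul_mpow_right:
  assumes W: "finite W"
  shows "\<sigma> \<in> cfgs D W \<Longrightarrow> \<tau> \<in> cfgs D W \<Longrightarrow> mmul D W (mpow D W H m) H \<sigma> \<tau> = mpow D W H (Suc m) \<sigma> \<tau>"
proof (induction m arbitrary: \<sigma> \<tau>)
  case 0
  then show ?case by (simp add: mmul_mone_left[OF W] mmul_mone_right[OF W])
next
  case (Suc m)
  have "mmul D W (mpow D W H (Suc m)) H \<sigma> \<tau> = mmul D W H (mmul D W (mpow D W H m) H) \<sigma> \<tau>"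
    by (simp add: mmul_assoc)
  also have "\<dots> = mmul D W H (mpow D W H (Suc m)) \<sigma> \<tau>"
    by (rule mmul_cong) (use Suc in auto)
  finally show ?case by simp
qed

lemma mmul_mmul_mpow_right:
  assumes W: "finite W" and \<sigma>: "\<sigma> \<in> cfgs D W" and \<tau>: "\<tau> \<in> cfgs D W"
  shows "mmul D W (mmul D W A (mmul D W B (mpow D W H m))) H \<sigma> \<tau> = mmul D W A (mmul D W B (mpow D W H (Suc m))) \<sigma> \<tau>"
proof -
  have inner: "mmul D W B (mmul D W (mpow D W H m) H) \<sigma>' \<tau>' = mmul D W B (mpow D W H (Suc m)) \<sigma>' \<tau>'"
    if "\<sigma>' \<in> cfgs D W" "\<tau>' \<in> cfgs D W" for \<sigma>' \<tau>'
    by (rule mmul_cong[OF _ mmul_mpow_right[OF W] that]) (rule refl)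
  have "mmul D W (mmul D W A (mmul D W B (mpow D W H m))) H \<sigma> \<tau>
      = mmul D W A (mmul D W B (mmul D W (mpow D W H m) H)) \<sigma> \<tau>"
    by (simp add: mmul_assoc)
  also have "\<dots> = mmul D W A (mmul D W B (mpow D W H (Suc m))) \<sigma> \<tau>"
    by (rule mmul_cong[OF _ inner \<sigma> \<tau>]) (rule refl)
  finally show ?thesis .
qed

lemma sum_binomial_signed_pascal:
  fixes a :: "nat \<Rightarrow> nat \<Rightarrow> complex"
  shows "(\<Sum>k\<le>n. of_nat (n choose k) * (-1) ^ (n - k) * (a (Suc k) (n - k) - a k (Suc (n - k))))
       = (\<Sum>k\<le>Suc n. of_nat (Suc n choose k) * (-1) ^ (Suc n - k) * a k (Suc n - k))"
proof -
  define g where "g k = of_nat (n choose k) * (-1) ^ (Suc n - k) * a k (Suc n - k)" for k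
  define h where "h k = of_nat (n choose k) * (-1) ^ (n - k) * a (Suc k) (n - k)" for k
  have "(\<Sum>k\<le>Suc n. g k) = (\<Sum>k\<le>n. g k)"
    by (simp add: g_def)
  then have g: "(\<Sum>k\<le>n. g k) = g 0 + (\<Sum>k\<le>n. g (Suc k))"
    by (simp only: sum.atMost_Suc_shift)
  have "(\<Sum>k\<le>n. of_nat (n choose k) * (-1) ^ (n - k) * (a (Suc k) (n - k) - a k (Suc (n - k))))
      = (\<Sum>k\<le>n. h k) + (\<Sum>k\<le>n. g k)"
    unfolding g_def h_def by (simp add: sum.distrib[symmetric] Suc_diff_le algebra_simps)
  moreover have "(\<Sum>k\<le>Suc n. of_nat (Suc n choose k) * (-1) ^ (Suc n - k) * a k (Suc n - k))
      = g 0 + (\<Sum>k\<le>n. h k) + (\<Sum>k\<le>n. g (Suc k))"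
    unfolding sum.atMost_Suc_shift g_def h_def by (simp add: sum.distrib algebra_simps)
  ultimately show ?thesis using g by simp
qed

text \<open>The binomial expansion of \<open>ad\<^sub>H\<^sup>n B = (L\<^sub>H - R\<^sub>H)\<^sup>n B\<close>, left and right multiplication by
  \<open>H\<close> being commuting operations.\<close>
lemma funpow_comm_binomial:
  assumes W: "finite W"
  shows "\<sigma> \<in> cfgs D W \<Longrightarrow> \<tau> \<in> cfgs D W \<Longrightarrow> (comm D W H ^^ n) B \<sigma> \<tau>
    = (\<Sum>k\<le>n. of_nat (n choose k) * (-1) ^ (n - k) * mmul D W (mpow D W H k) (mmul D W B (mpow D W H (n - k))) \<sigma> \<tau>)"
proof (induction n arbitrary: \<sigma> \<tau>)
  case 0
  then show ?case by (simp add: mmul_mone_left[OF W] mmul_mone_right[OF W])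
next
  case (Suc n)
  define P where "P k m = mmul D W (mpow D W H k) (mmul D W B (mpow D W H m))" for k m
  define c where "c k = (of_nat (n choose k) * (-1) ^ (n - k) :: complex)" for k
  let ?A = "(comm D W H ^^ n) B"
  have A: "?A \<sigma>' \<tau>' = (\<Sum>k\<le>n. c k * P k (n - k) \<sigma>' \<tau>')" if "\<sigma>' \<in> cfgs D W" "\<tau>' \<in> cfgs D W" for \<sigma>' \<tau>'
    using Suc.IH[OF that] by (simp add: P_def c_def)
  have left: "mmul D W H (P k m) = P (Suc k) m" for k m
    by (simp add: P_def mmul_assoc)
  have right: "mmul D W (P k m) H \<sigma> \<tau> = P k (Suc m) \<sigma> \<tau>" for k m
    unfolding P_def by (rule mmul_mmul_mpow_right[OF W Suc.prems])
  have "mmul D W H ?A \<sigma> \<tau> = (\<Sum>k\<le>n. c k * P (Suc k) (n - k) \<sigma> \<tau>)"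
  proof -
    have "mmul D W H ?A \<sigma> \<tau> = mmul D W H (\<lambda>\<sigma> \<tau>. \<Sum>k\<le>n. c k * P k (n - k) \<sigma> \<tau>) \<sigma> \<tau>"
      by (rule mmul_cong) (use A Suc.prems in auto)
    then show ?thesis by (simp only: mmul_lincomb_right left)
  qed
  moreover have "mmul D W ?A H \<sigma> \<tau> = (\<Sum>k\<le>n. c k * P k (Suc (n - k)) \<sigma> \<tau>)"
  proof -
    have "mmul D W ?A H \<sigma> \<tau> = mmul D W (\<lambda>\<sigma> \<tau>. \<Sum>k\<le>n. c k * P k (n - k) \<sigma> \<tau>) H \<sigma> \<tau>"
      by (rule mmul_cong) (use A Suc.prems in auto)
    then show ?thesis by (simp only: mmul_lincomb_left right)
  qed
  ultimately have "(comm D W H ^^ Suc n) B \<sigma> \<tau> = (\<Sum>k\<le>n. c k * (P (Suc k) (n - k) \<sigma> \<tau> - P k (Suc (n - k)) \<sigma> \<tau>))"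
    by (simp add: comm_def right_diff_distrib sum_subtractf)
  also have "\<dots> = (\<Sum>k\<le>Suc n. of_nat (Suc n choose k) * (-1) ^ (Suc n - k) * P k (Suc n - k) \<sigma> \<tau>)"
    unfolding c_def by (rule sum_binomial_signed_pascal[where a = "\<lambda>k m. P k m \<sigma> \<tau>"])
  finally show ?case by (simp add: P_def)
qed

lemma mpow_mult: "mpow D W (\<lambda>\<sigma> \<tau>. c * H \<sigma> \<tau>) n = (\<lambda>\<sigma> \<tau>. c ^ n * mpow D W H n \<sigma> \<tau>)"
  by (induction n) (simp_all add: mone_def mmul_def sum_distrib_left mult_ac)

lemma norm_mpow_le:
  assumes W: "finite W"
  shows "\<sigma> \<in> cfgs D W \<Longrightarrow> \<rho> \<in> cfgs D W \<Longrightarrow>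
    cmod (mpow D W H k \<sigma> \<rho>) \<le> (real (card (cfgs D W)) * (\<Sum>\<sigma>\<in>cfgs D W. \<Sum>\<tau>\<in>cfgs D W. cmod (H \<sigma> \<tau>))) ^ k"
proof (induction k arbitrary: \<sigma> \<rho>)
  case 0
  then show ?case by (simp add: mone_def)
next
  case (Suc k)
  let ?M = "\<Sum>\<sigma>\<in>cfgs D W. \<Sum>\<tau>\<in>cfgs D W. cmod (H \<sigma> \<tau>)" and ?N = "real (card (cfgs D W))"
  have fin: "finite (cfgs D W)" using W by (rule finite_cfgs)
  have entry: "cmod (H \<sigma>' \<tau>') \<le> ?M" if "\<sigma>' \<in> cfgs D W" "\<tau>' \<in> cfgs D W" for \<sigma>' \<tau>'
    using member_le_sum[of \<tau>' "cfgs D W" "\<lambda>\<tau>. cmod (H \<sigma>' \<tau>)"]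
      member_le_sum[of \<sigma>' "cfgs D W" "\<lambda>\<sigma>. \<Sum>\<tau>\<in>cfgs D W. cmod (H \<sigma> \<tau>)"] that fin
    by (simp add: sum_nonneg)
  have "cmod (mpow D W H (Suc k) \<sigma> \<rho>) \<le> (\<Sum>\<rho>'\<in>cfgs D W. cmod (H \<sigma> \<rho>') * cmod (mpow D W H k \<rho>' \<rho>))"
    by (simp add: mmul_def norm_mult[symmetric] norm_sum)
  also have "\<dots> \<le> (\<Sum>\<rho>'\<in>cfgs D W. ?M * (?N * ?M) ^ k)"
    by (intro sum_mono mult_mono entry Suc.prems Suc.IH) (auto intro!: sum_nonneg)
  also have "\<dots> = (?N * ?M) ^ Suc k" by simp
  finally show ?case .
qed

lemma mexp_sums:
  assumes W: "finite W" and \<sigma>: "\<sigma> \<in> cfgs D W" and \<rho>: "\<rho> \<in> cfgs D W"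
  shows "summable (\<lambda>k. norm (d ^ k * mpow D W H k \<sigma> \<rho> / of_nat (fact k)))"
    and "(\<lambda>k. d ^ k * mpow D W H k \<sigma> \<rho> / of_nat (fact k)) sums mexp D W (\<lambda>\<sigma> \<tau>. d * H \<sigma> \<tau>) \<sigma> \<rho>"
proof -
  let ?R = "real (card (cfgs D W)) * (\<Sum>\<sigma>\<in>cfgs D W. \<Sum>\<tau>\<in>cfgs D W. cmod (H \<sigma> \<tau>))"
  have "norm (norm (d ^ n * mpow D W H n \<sigma> \<rho> / of_nat (fact n))) \<le> inverse (fact n) * (cmod d * ?R) ^ n" for n
  proof -
    have "norm (norm (d ^ n * mpow D W H n \<sigma> \<rho> / of_nat (fact n))) = cmod d ^ n * cmod (mpow D W H n \<sigma> \<rho>) / fact n"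
      by (simp add: norm_mult norm_divide norm_power)
    also have "\<dots> \<le> cmod d ^ n * ?R ^ n / fact n"
      by (intro divide_right_mono mult_left_mono norm_mpow_le[OF W \<sigma> \<rho>]) auto
    finally show ?thesis by (simp add: power_mult_distrib field_simps)
  qed
  then show summable: "summable (\<lambda>k. norm (d ^ k * mpow D W H k \<sigma> \<rho> / of_nat (fact k)))"
    by (intro summable_comparison_test[OF _ summable_exp]) blast
  show "(\<lambda>k. d ^ k * mpow D W H k \<sigma> \<rho> / of_nat (fact k)) sums mexp D W (\<lambda>\<sigma> \<tau>. d * H \<sigma> \<tau>) \<sigma> \<rho>"
    using summable_sums[OF summable_norm_cancel[OF summable]] by (simp add: mexp_def mpow_mult)
qed

lemma mexp_mult_mexp_sums:
  assumes W: "finite W"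
    and \<sigma>: "\<sigma> \<in> cfgs D W" and \<rho>: "\<rho> \<in> cfgs D W" and \<rho>': "\<rho>' \<in> cfgs D W" and \<tau>: "\<tau> \<in> cfgs D W"
  shows "(\<lambda>n. \<Sum>k\<le>n. (c ^ k * mpow D W H k \<sigma> \<rho> / of_nat (fact k))
              * (d ^ (n - k) * mpow D W H (n - k) \<rho>' \<tau> / of_nat (fact (n - k))))
     sums (mexp D W (\<lambda>\<sigma> \<tau>. c * H \<sigma> \<tau>) \<sigma> \<rho> * mexp D W (\<lambda>\<sigma> \<tau>. d * H \<sigma> \<tau>) \<rho>' \<tau>)"
proof -
  define a where "a k = c ^ k * mpow D W H k \<sigma> \<rho> / of_nat (fact k)" for k
  define b where "b m = d ^ m * mpow D W H m \<rho>' \<tau> / of_nat (fact m)" for m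
  have "summable (\<lambda>k. norm (a k))" "summable (\<lambda>k. norm (b k))"
    unfolding a_def b_def by (rule mexp_sums(1)[OF W \<sigma> \<rho>], rule mexp_sums(1)[OF W \<rho>' \<tau>])
  moreover have "(\<Sum>k. a k) = mexp D W (\<lambda>\<sigma> \<tau>. c * H \<sigma> \<tau>) \<sigma> \<rho>"
    unfolding a_def by (rule sums_unique[symmetric], rule mexp_sums(2)[OF W \<sigma> \<rho>])
  moreover have "(\<Sum>k. b k) = mexp D W (\<lambda>\<sigma> \<tau>. d * H \<sigma> \<tau>) \<rho>' \<tau>"
    unfolding b_def by (rule sums_unique[symmetric], rule mexp_sums(2)[OF W \<rho>' \<tau>])
  ultimately show ?thesis
    using Cauchy_product_sums[of a b] unfolding a_def b_def by simp
qed

lemma power_div_fact_binomial: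
  fixes c :: complex
  assumes "k \<le> n"
  shows "c ^ n / of_nat (fact n) * (of_nat (n choose k) * (-1) ^ (n - k))
       = (c ^ k / of_nat (fact k)) * ((- c) ^ (n - k) / of_nat (fact (n - k)))"
proof -
  have "c ^ n = c ^ k * c ^ (n - k)" using assms by (metis le_add_diff_inverse power_add)
  moreover have "(of_nat (n choose k) :: complex) = fact n / (fact k * fact (n - k))"
    by (rule binomial_fact[OF assms])
  moreover have "(- c) ^ (n - k) = (-1) ^ (n - k) * c ^ (n - k)" by (rule power_minus)
  ultimately show ?thesis by (simp add: field_simps)
qed

text \<open>Multiplying out the two exponential series (Cauchy product) and collecting the terms of
  total degree \<open>n\<close> produces exactly the binomial expansion of \<open>ad\<^sub>H\<^sup>n B\<close>.\<close>
lemma gam_sums: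
  assumes W: "finite W" and \<sigma>: "\<sigma> \<in> cfgs D W" and \<tau>: "\<tau> \<in> cfgs D W"
  shows "(\<lambda>n. (\<i> * s) ^ n / of_nat (fact n) * (comm D W H ^^ n) B \<sigma> \<tau>) sums gam D W H s B \<sigma> \<tau>"
proof -
  define c where "c = \<i> * s"
  define a where "a \<rho> k = c ^ k * mpow D W H k \<sigma> \<rho> / of_nat (fact k)" for \<rho> k
  define b where "b \<rho>' m = (- c) ^ m * mpow D W H m \<rho>' \<tau> / of_nat (fact m)" for \<rho>' m
  define E1 where "E1 \<rho> = mexp D W (\<lambda>\<sigma> \<tau>. c * H \<sigma> \<tau>) \<sigma> \<rho>" for \<rho>
  define E2 where "E2 \<rho>' = mexp D W (\<lambda>\<sigma> \<tau>. (- c) * H \<sigma> \<tau>) \<rho>' \<tau>" for \<rho>'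
  let ?C = "cfgs D W"
  have "gam D W H s B \<sigma> \<tau> = (\<Sum>\<rho>'\<in>?C. \<Sum>\<rho>\<in>?C. (E1 \<rho> * B \<rho> \<rho>') * E2 \<rho>')"
    unfolding gam_def mmul_def E1_def E2_def c_def by (simp add: sum_distrib_right)
  also have "\<dots> = (\<Sum>\<rho>'\<in>?C. \<Sum>\<rho>\<in>?C. B \<rho> \<rho>' * (E1 \<rho> * E2 \<rho>'))"
    by (simp only: mult_ac)
  finally have gam: "gam D W H s B \<sigma> \<tau> = (\<Sum>\<rho>'\<in>?C. \<Sum>\<rho>\<in>?C. B \<rho> \<rho>' * (E1 \<rho> * E2 \<rho>'))" .
  have cauchy: "(\<lambda>n. \<Sum>k\<le>n. a \<rho> k * b \<rho>' (n - k)) sums (E1 \<rho> * E2 \<rho>')"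
    if "\<rho> \<in> ?C" "\<rho>' \<in> ?C" for \<rho> \<rho>'
    unfolding a_def b_def E1_def E2_def by (rule mexp_mult_mexp_sums[OF W \<sigma> that \<tau>])
  have degree_n: "(\<Sum>\<rho>'\<in>?C. \<Sum>\<rho>\<in>?C. B \<rho> \<rho>' * (\<Sum>k\<le>n. a \<rho> k * b \<rho>' (n - k)))
         = c ^ n / of_nat (fact n) * (comm D W H ^^ n) B \<sigma> \<tau>" for n
  proof -
    have "(\<Sum>\<rho>'\<in>?C. \<Sum>\<rho>\<in>?C. B \<rho> \<rho>' * (\<Sum>k\<le>n. a \<rho> k * b \<rho>' (n - k)))
        = (\<Sum>\<rho>\<in>?C. \<Sum>\<rho>'\<in>?C. \<Sum>k\<le>n. B \<rho> \<rho>' * (a \<rho> k * b \<rho>' (n - k)))"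
      by (subst sum.swap) (simp add: sum_distrib_left)
    also have "\<dots> = (\<Sum>k\<le>n. \<Sum>\<rho>\<in>?C. \<Sum>\<rho>'\<in>?C. B \<rho> \<rho>' * (a \<rho> k * b \<rho>' (n - k)))"
      by (subst sum.swap) (intro sum.cong refl sum.swap)
    also have "\<dots> = (\<Sum>k\<le>n. \<Sum>\<rho>\<in>?C. \<Sum>\<rho>'\<in>?C. c ^ n / of_nat (fact n) * (of_nat (n choose k) * (-1) ^ (n - k))
                      * (mpow D W H k \<sigma> \<rho> * (B \<rho> \<rho>' * mpow D W H (n - k) \<rho>' \<tau>)))"
    proof (intro sum.cong refl)
      fix k \<rho> \<rho>' assume "k \<in> {..n}"
      then have k: "k \<le> n" by simp
      show "B \<rho> \<rho>' * (a \<rho> k * b \<rho>' (n - k)) = c ^ n / of_nat (fact n) * (of_nat (n choose k) * (-1) ^ (n - k))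
                      * (mpow D W H k \<sigma> \<rho> * (B \<rho> \<rho>' * mpow D W H (n - k) \<rho>' \<tau>))"
        unfolding power_div_fact_binomial[OF k] a_def b_def
        by (simp only: times_divide_eq_right times_divide_eq_left mult.assoc mult.commute mult.left_commute)
    qed
    also have "\<dots> = c ^ n / of_nat (fact n) * (\<Sum>k\<le>n. of_nat (n choose k) * (-1) ^ (n - k) *
            mmul D W (mpow D W H k) (mmul D W B (mpow D W H (n - k))) \<sigma> \<tau>)"
      by (simp only: mmul_def sum_distrib_left mult.assoc)
    finally show ?thesis by (simp add: funpow_comm_binomial[OF W \<sigma> \<tau>])
  qed
  have "(\<lambda>n. \<Sum>\<rho>'\<in>?C. \<Sum>\<rho>\<in>?C. B \<rho> \<rho>' * (\<Sum>k\<le>n. a \<rho> k * b \<rho>' (n - k))) sums gam D W H s B \<sigma> \<tau>"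
    unfolding gam by (intro sums_sum sums_mult cauchy)
  then show ?thesis unfolding degree_n c_def .
qed

section \<open>Summing over linked sequences\<close>

lemma power_div_fact_le_exp:
  assumes "0 \<le> (x::real)"
  shows "x ^ n / fact n \<le> exp x"
proof -
  have exp: "(\<lambda>n. x ^ n /\<^sub>R fact n) sums exp x" by (rule exp_converges)
  have "(\<Sum>i\<in>{n}. x ^ i /\<^sub>R fact i) \<le> (\<Sum>i. x ^ i /\<^sub>R fact i)"
    by (rule sum_le_suminf) (use exp assms in \<open>auto simp: sums_iff\<close>)
  then show ?thesis using sums_unique[OF exp] by (simp add: divide_inverse_commute)
qed

lemma power_mult_exp_neg_le:
  assumes lam: "0 < lam"
  shows "(real c + real k) ^ n * exp (- lam * real k) \<le> exp (lam * real c) * fact n / lam ^ n"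
proof -
  let ?t = "real c + real k"
  have "(lam * ?t) ^ n / fact n \<le> exp (lam * ?t)" by (rule power_div_fact_le_exp) (use lam in simp)
  then have "lam ^ n * (?t ^ n * exp (- lam * real k)) \<le> exp (lam * ?t) * fact n * exp (- lam * real k)"
    by (simp add: power_mult_distrib divide_le_eq mult.assoc[symmetric] mult_right_mono)
  also have "\<dots> = exp (lam * real c) * fact n"
    by (simp add: mult_ac exp_add[symmetric] algebra_simps)
  finally show ?thesis using lam by (simp add: le_divide_eq mult.commute)
qed

lemma power_exp_bound_shift:
  fixes c c' lam M :: real
  assumes M: "\<And>k::nat. (c + real k) ^ Suc n * exp (- lam * real k) \<le> M"
    and c: "1 \<le> c" and c': "0 \<le> c'" "c' \<le> c + real m"
  shows "(c' + real k) ^ n * exp (- lam * real k) \<le> M * exp (lam * real m) / c"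
proof -
  let ?t = "c + real m + real k"
  have "(c' + real k) ^ n * exp (- lam * real k) \<le> ?t ^ n * exp (- lam * real k)"
    using c' by (intro mult_right_mono power_mono) auto
  also have "\<dots> = ?t ^ Suc n * exp (- lam * real (m + k)) * exp (lam * real m) / ?t"
  proof -
    have "exp (- lam * real (m + k)) * exp (lam * real m) = exp (- lam * real k)"
      by (simp add: exp_add[symmetric] algebra_simps)
    moreover have "?t ^ Suc n * A / ?t = ?t ^ n * A" for A
      using c by simp
    ultimately show ?thesis by (metis mult.assoc)
  qed
  also have "\<dots> \<le> M * exp (lam * real m) / ?t"
    using M[of "m + k"] c by (intro divide_right_mono mult_right_mono) (auto simp: add.assoc)
  also have "\<dots> \<le> M * exp (lam * real m) / c"
    using c M[of 0] by (intro divide_left_mono mult_nonneg_nonneg) (auto intro: order_trans[rotated])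
  finally show ?thesis .
qed

lemma sum_meeting_le_sum_members:
  fixes f :: "'a set \<Rightarrow> real"
  assumes S: "finite S" and f: "\<And>X. X \<in> P \<Longrightarrow> 0 \<le> f X"
  shows "(\<Sum>X\<in>P. if X \<inter> S \<noteq> {} then f X else 0) \<le> (\<Sum>x\<in>S. \<Sum>X\<in>P. if x \<in> X then f X else 0)"
proof -
  have "(if X \<inter> S \<noteq> {} then f X else 0) \<le> (\<Sum>x\<in>S. if x \<in> X then f X else 0)" if X: "X \<in> P" for X
  proof (cases "X \<inter> S = {}")
    case False
    then obtain x where "x \<in> X" "x \<in> S" by blast
    then show ?thesis
      using member_le_sum[of x S "\<lambda>x. if x \<in> X then f X else 0"] S f[OF X] False by simp
  qed (simp add: sum_nonneg f[OF X])
  then show ?thesis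
    by (subst sum.swap) (rule sum_mono)
qed

lemma sum_linked_lists_Suc:
  fixes w :: "'v set \<Rightarrow> real"
  assumes "finite P"
  shows "(\<Sum>Xs\<in>{Xs. set Xs \<subseteq> P \<and> length Xs = Suc n}. if linked S Xs then (\<Prod>X\<leftarrow>Xs. w X) else 0)
     = (\<Sum>X\<in>P. if X \<inter> S \<noteq> {}
          then w X * (\<Sum>Xs\<in>{Xs. set Xs \<subseteq> P \<and> length Xs = n}. if linked (S \<union> X) Xs then (\<Prod>X\<leftarrow>Xs. w X) else 0)
          else 0)"
  unfolding sum_lists_length_Suc[OF assms]
proof (intro sum.cong refl)
  fix X
  show "(\<Sum>Xs\<in>{Xs. set Xs \<subseteq> P \<and> length Xs = n}. if linked S (X # Xs) then (\<Prod>X\<leftarrow>X # Xs. w X) else 0)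
      = (if X \<inter> S \<noteq> {}
          then w X * (\<Sum>Xs\<in>{Xs. set Xs \<subseteq> P \<and> length Xs = n}. if linked (S \<union> X) Xs then (\<Prod>X\<leftarrow>Xs. w X) else 0)
          else 0)"
  proof (cases "X \<inter> S = {}")
    case False
    then have "(\<Sum>Xs\<in>{Xs. set Xs \<subseteq> P \<and> length Xs = n}. if linked S (X # Xs) then (\<Prod>X\<leftarrow>X # Xs. w X) else 0)
        = (\<Sum>Xs\<in>{Xs. set Xs \<subseteq> P \<and> length Xs = n}. w X * (if linked (S \<union> X) Xs then (\<Prod>X\<leftarrow>Xs. w X) else 0))"
      by (intro sum.cong refl) simp
    then show ?thesis using False by (simp add: sum_distrib_left)
  qed simp
qed

lemma sum_meeting_le:
  fixes w T :: "'a set \<Rightarrow> real"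
  assumes S: "finite S" "S \<noteq> {}" and w: "\<And>X. X \<in> P \<Longrightarrow> 0 \<le> w X"
    and local: "\<And>x. (\<Sum>X\<in>P. if x \<in> X then w X * exp (lam * real (card X)) else 0) \<le> a"
    and B: "0 \<le> B" and T: "\<And>X. X \<in> P \<Longrightarrow> T X \<le> B * (exp (lam * real (card X)) / real (card S))"
  shows "(\<Sum>X\<in>P. if X \<inter> S \<noteq> {} then w X * T X else 0) \<le> a * B"
proof -
  define c where "c = real (card S)"
  have c: "1 \<le> c" using S by (simp add: c_def Suc_leI card_gt_0_iff)
  have "(\<Sum>X\<in>P. if X \<inter> S \<noteq> {} then w X * T X else 0)
      \<le> (\<Sum>X\<in>P. if X \<inter> S \<noteq> {} then w X * exp (lam * real (card X)) * (B / c) else 0)"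
  proof (intro sum_mono)
    fix X assume X: "X \<in> P"
    have "w X * T X \<le> w X * (B * (exp (lam * real (card X)) / c))"
      using mult_left_mono[OF T[OF X] w[OF X]] by (simp add: c_def)
    then show "(if X \<inter> S \<noteq> {} then w X * T X else 0)
        \<le> (if X \<inter> S \<noteq> {} then w X * exp (lam * real (card X)) * (B / c) else 0)"
      by (simp add: mult_ac)
  qed
  also have "\<dots> \<le> (\<Sum>x\<in>S. \<Sum>X\<in>P. if x \<in> X then w X * exp (lam * real (card X)) * (B / c) else 0)"
    using S(1) w B c by (intro sum_meeting_le_sum_members) auto
  also have "\<dots> = (\<Sum>x\<in>S. (\<Sum>X\<in>P. if x \<in> X then w X * exp (lam * real (card X)) else 0) * (B / c))"
    by (simp only: sum_distrib_right if_distrib[where f = "\<lambda>y. y * (B / c)"] mult_zero_left)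
  also have "\<dots> \<le> (\<Sum>x\<in>S. a * (B / c))"
    using B c by (intro sum_mono mult_right_mono local) auto
  also have "\<dots> = a * B" using c by (simp add: c_def)
  finally show ?thesis .
qed

text \<open>Each new set \<open>X\<close> must meet the region \<open>S\<close> reached
  so far; choosing the meeting point costs a factor \<open>|S|\<close>, while enlarging \<open>S\<close> by \<open>X\<close> is paid for
  by the weight \<open>exp (\<lambda> |X|)\<close>. The hypothesis on \<open>M\<close> keeps track of both effects.\<close>
lemma sum_linked_lists_le:
  fixes P :: "'v set set" and w :: "'v set \<Rightarrow> real"
  assumes P: "finite P" "\<And>X. X \<in> P \<Longrightarrow> finite X" and w: "\<And>X. X \<in> P \<Longrightarrow> 0 \<le> w X"
    and local: "\<And>x. (\<Sum>X\<in>P. if x \<in> X then w X * exp (lam * real (card X)) else 0) \<le> a"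
  shows "finite S \<Longrightarrow> (\<And>k::nat. (real (card S) + real k) ^ n * exp (- lam * real k) \<le> M) \<Longrightarrow>
     (\<Sum>Xs\<in>{Xs. set Xs \<subseteq> P \<and> length Xs = n}. if linked S Xs then (\<Prod>X\<leftarrow>Xs. w X) else 0) \<le> a ^ n * M"
proof (induction n arbitrary: S M)
  case 0
  have "{Xs. set Xs \<subseteq> P \<and> length Xs = 0} = {[]}" by auto
  then show ?case using "0.prems"(2)[of 0] by simp
next
  case (Suc n)
  let ?T = "\<lambda>S. \<Sum>Xs\<in>{Xs. set Xs \<subseteq> P \<and> length Xs = n}. if linked S Xs then (\<Prod>X\<leftarrow>Xs. w X) else 0"
  have "0 \<le> (real (card S) + real 0) ^ Suc n * exp (- lam * real 0)" by simp
  with Suc.prems(2)[of 0] have M: "0 \<le> M" by linarith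
  have a: "0 \<le> a"
    using local[of undefined] sum_nonneg[of P "\<lambda>X. if undefined \<in> X then w X * exp (lam * real (card X)) else 0"] w
    by fastforce
  note split = sum_linked_lists_Suc[OF P(1), where n = n and S = S and w = w]
  show ?case
  proof (cases "S = {}")
    case True
    then show ?thesis unfolding split using M a by simp
  next
    case False
    define c where "c = real (card S)"
    have c: "1 \<le> c" using False Suc.prems(1) by (simp add: c_def Suc_leI card_gt_0_iff)
    have IH: "?T (S \<union> X) \<le> a ^ n * (M * exp (lam * real (card X)) / c)" if X: "X \<in> P" for X
    proof (rule Suc.IH)
      show "finite (S \<union> X)" using Suc.prems(1) P(2)[OF X] by simp
      show "(real (card (S \<union> X)) + real k) ^ n * exp (- lam * real k) \<le> M * exp (lam * real (card X)) / c" for k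
        using Suc.prems(2) c card_Un_le[of S X]
        by (intro power_exp_bound_shift[where c = c]) (auto simp: c_def)
    qed
    have "(\<Sum>X\<in>P. if X \<inter> S \<noteq> {} then w X * ?T (S \<union> X) else 0) \<le> a * (a ^ n * M)"
      using Suc.prems(1) False w local M a IH unfolding c_def by (intro sum_meeting_le) (auto simp: mult.assoc)
    then show ?thesis unfolding split by simp
  qed
qed

lemma linked_dist_le_sum_diameter:
  fixes S :: "'v::metric_space set"
  shows "linked S Xs \<Longrightarrow> (\<And>X. X \<in> set Xs \<Longrightarrow> finite X) \<Longrightarrow> p \<in> S \<union> \<Union>(set Xs) \<Longrightarrow>
    \<exists>z\<in>S. dist z p \<le> (\<Sum>X\<leftarrow>Xs. diameter X)"
proof (induction Xs arbitrary: S)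
  case (Cons X Xs)
  have fX: "finite X" and linked: "X \<inter> S \<noteq> {}" "linked (S \<union> X) Xs" using Cons.prems by auto
  obtain z' where z': "z' \<in> S \<union> X" "dist z' p \<le> (\<Sum>X\<leftarrow>Xs. diameter X)"
    using Cons.IH[OF linked(2)] Cons.prems by auto
  have diam: "0 \<le> diameter X" using fX by (simp add: diameter_ge_0 finite_imp_bounded)
  show ?case
  proof (cases "z' \<in> S")
    case True
    then show ?thesis using z' diam by (intro bexI[of _ z']) auto
  next
    case False
    obtain q where q: "q \<in> X" "q \<in> S" using linked by blast
    have "dist q z' \<le> diameter X"
      using fX q False z' by (intro diameter_bounded_bound finite_imp_bounded) auto
    then have "dist q p \<le> diameter X + (\<Sum>X\<leftarrow>Xs. diameter X)"
      using dist_triangle[of q p z'] z' by linarith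
    then show ?thesis using q by auto
  qed
qed auto

lemma sum_list_diameter_nonneg:
  fixes Xs :: "'v::metric_space set list"
  shows "(\<And>X. X \<in> set Xs \<Longrightarrow> finite X) \<Longrightarrow> 0 \<le> (\<Sum>X\<leftarrow>Xs. diameter X)"
  by (rule sum_list_nonneg) (auto intro: diameter_ge_0 finite_imp_bounded)

lemma prod_list_mult_exp:
  "(\<Prod>X\<leftarrow>Xs. f X * exp (mu * diameter X)) = (\<Prod>X\<leftarrow>Xs. f X) * exp (mu * (\<Sum>X\<leftarrow>Xs. diameter X))"
  by (induction Xs) (simp_all add: distrib_left exp_add)

lemma sum_containing_le_inorm:
  fixes \<Phi> :: "'v::metric_space set \<Rightarrow> 'v mat"
  assumes fin: "inorm_e D lam mu \<Phi> < \<infinity>" and P: "finite P" "\<And>X. X \<in> P \<Longrightarrow> finite X"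
  shows "(\<Sum>X\<in>P. if x \<in> X then opnorm D X (\<Phi> X) * exp (mu * diameter X) * exp (lam * real (card X)) else 0)
         \<le> inorm D lam mu \<Phi>"
proof -
  define g where "g X = opnorm D X (\<Phi> X) * exp (lam * real (card X) + mu * diameter X)" for X
  let ?F = "{X \<in> P. x \<in> X}"
  have g: "0 \<le> g X" if "X \<in> ?F" for X
    using that P by (simp add: g_def opnorm_nonneg)
  have "ennreal (sum g ?F) = (\<Sum>X\<in>?F. ennreal (g X))"
    by (rule sym, rule sum_ennreal) (use g in auto)
  also have "\<dots> = (\<Sum>\<^sub>\<infinity>X\<in>?F. ennreal (g X))"
    using P(1) by simp
  also have "\<dots> \<le> (\<Sum>\<^sub>\<infinity>X\<in>{X. finite X \<and> x \<in> X}. ennreal (g X))"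
    using P(2) by (intro infsum_mono_neutral) (auto intro: nonneg_summable_on_complete)
  also have "\<dots> \<le> inorm_e D lam mu \<Phi>"
    unfolding inorm_e_def g_def by (rule SUP_upper) simp
  finally have le: "ennreal (sum g ?F) \<le> inorm_e D lam mu \<Phi>" .
  have "0 \<le> sum g ?F" by (rule sum_nonneg) (use g in auto)
  then have "sum g ?F = enn2real (ennreal (sum g ?F))" by simp
  also have "\<dots> \<le> inorm D lam mu \<Phi>"
    unfolding inorm_def by (rule enn2real_mono[OF le]) (use fin in simp)
  finally have "sum g ?F \<le> inorm D lam mu \<Phi>" .
  moreover have "(\<Sum>X\<in>P. if x \<in> X then opnorm D X (\<Phi> X) * exp (mu * diameter X) * exp (lam * real (card X)) else 0)
      = sum g ?F"
    unfolding sum.inter_filter[OF P(1)] g_def by (intro sum.cong refl) (simp add: exp_add mult_ac)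
  ultimately show ?thesis by simp
qed

section \<open>Norm bounds for the dynamics\<close>

lemma inorm_nonneg: "0 \<le> inorm D lam mu \<Phi>"
  by (simp add: inorm_def)

lemma prod_opnorm_le_decay:
  fixes \<Phi> :: "'v::metric_space set \<Rightarrow> 'v mat"
  assumes "\<And>X. X \<in> set Xs \<Longrightarrow> finite X" and "exp (- mu * (\<Sum>X\<leftarrow>Xs. diameter X)) \<le> E"
  shows "(\<Prod>X\<leftarrow>Xs. opnorm D X (\<Phi> X)) \<le> (\<Prod>X\<leftarrow>Xs. opnorm D X (\<Phi> X) * exp (mu * diameter X)) * E"
proof -
  have "(\<Prod>X\<leftarrow>Xs. opnorm D X (\<Phi> X))
      = (\<Prod>X\<leftarrow>Xs. opnorm D X (\<Phi> X) * exp (mu * diameter X)) * exp (- mu * (\<Sum>X\<leftarrow>Xs. diameter X))"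
    unfolding prod_list_mult_exp by (simp add: mult.assoc exp_add[symmetric])
  also have "\<dots> \<le> (\<Prod>X\<leftarrow>Xs. opnorm D X (\<Phi> X) * exp (mu * diameter X)) * E"
    using assms by (intro mult_left_mono prod_list_nonneg) (auto simp: opnorm_nonneg)
  finally show ?thesis .
qed

lemma opnorm_sum_nested_comm_decay_le:
  fixes \<Phi> :: "'v::metric_space set \<Rightarrow> 'v mat" and Q :: "'v mat"
  assumes fin: "inorm_e D lam mu \<Phi> < \<infinity>" and lam: "0 < lam"
    and W: "finite W" and Z: "Z \<subseteq> W"
    and Xss: "\<And>Xs. Xs \<in> \<X> \<Longrightarrow> set Xs \<subseteq> Pow W \<and> length Xs = n"
    and E: "0 \<le> E" "\<And>Xs. Xs \<in> \<X> \<Longrightarrow> linked Z Xs \<Longrightarrow> exp (- mu * (\<Sum>X\<leftarrow>Xs. diameter X)) \<le> E"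
  shows "opnorm D W (\<lambda>\<sigma> \<tau>. \<Sum>Xs\<in>\<X>. nested_comm D W \<Phi> (emb Z Q) Xs \<sigma> \<tau>)
     \<le> 2 ^ n * opnorm D Z Q * E * (inorm D lam mu \<Phi> ^ n * (exp (lam * real (card Z)) * fact n / lam ^ n))"
proof -
  define w where "w X = opnorm D X (\<Phi> X) * exp (mu * diameter X)" for X
  define C where "C = 2 ^ n * opnorm D Z Q * E"
  let ?L = "{Xs. set Xs \<subseteq> Pow W \<and> length Xs = n}"
  have Q: "0 \<le> opnorm D Z Q" using W Z by (simp add: opnorm_nonneg finite_subset)
  then have C: "0 \<le> C" using E(1) by (simp add: C_def)
  have w: "0 \<le> w X" if "X \<subseteq> W" for X
    using that W by (simp add: w_def opnorm_nonneg finite_subset)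
  have prod_w: "0 \<le> (\<Prod>X\<leftarrow>Xs. w X)" if "set Xs \<subseteq> Pow W" for Xs
    using that w by (intro prod_list_nonneg) auto
  have decay: "(if linked Z Xs then 2 ^ n * opnorm D Z Q * (\<Prod>X\<leftarrow>Xs. opnorm D X (\<Phi> X)) else 0)
      \<le> C * (if linked Z Xs then \<Prod>X\<leftarrow>Xs. w X else 0)" if Xs: "Xs \<in> \<X>" for Xs
  proof (cases "linked Z Xs")
    case True
    have "(\<Prod>X\<leftarrow>Xs. opnorm D X (\<Phi> X)) \<le> (\<Prod>X\<leftarrow>Xs. w X) * E"
      unfolding w_def using Xss[OF Xs] W E(2)[OF Xs True]
      by (intro prod_opnorm_le_decay) (auto intro: finite_subset)
    then have "2 ^ n * opnorm D Z Q * (\<Prod>X\<leftarrow>Xs. opnorm D X (\<Phi> X))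
        \<le> 2 ^ n * opnorm D Z Q * ((\<Prod>X\<leftarrow>Xs. w X) * E)"
      using Q by (intro mult_left_mono) auto
    then show ?thesis using True by (simp add: C_def mult_ac)
  qed (simp add: C_def)
  have "opnorm D W (\<lambda>\<sigma> \<tau>. \<Sum>Xs\<in>\<X>. nested_comm D W \<Phi> (emb Z Q) Xs \<sigma> \<tau>)
      \<le> (\<Sum>Xs\<in>\<X>. if linked Z Xs then 2 ^ n * opnorm D Z Q * (\<Prod>X\<leftarrow>Xs. opnorm D X (\<Phi> X)) else 0)"
    by (rule opnorm_sum_nested_comm_le[OF W Z Xss])
  also have "\<dots> \<le> (\<Sum>Xs\<in>\<X>. C * (if linked Z Xs then \<Prod>X\<leftarrow>Xs. w X else 0))"
    by (intro sum_mono decay)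
  also have "\<dots> \<le> (\<Sum>Xs\<in>?L. C * (if linked Z Xs then \<Prod>X\<leftarrow>Xs. w X else 0))"
    using Xss W C prod_w by (intro sum_mono2) (auto simp: finite_lists_length_eq)
  also have "\<dots> \<le> C * (inorm D lam mu \<Phi> ^ n * (exp (lam * real (card Z)) * fact n / lam ^ n))"
    unfolding sum_distrib_left[symmetric]
  proof (intro mult_left_mono C sum_linked_lists_le[where lam = lam])
    show "(\<Sum>X\<in>Pow W. if x \<in> X then w X * exp (lam * real (card X)) else 0) \<le> inorm D lam mu \<Phi>" for x
      unfolding w_def using W by (intro sum_containing_le_inorm[OF fin]) (auto intro: finite_subset)
    show "(real (card Z) + real k) ^ n * exp (- lam * real k) \<le> exp (lam * real (card Z)) * fact n / lam ^ n" for k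
      by (rule power_mult_exp_neg_le[OF lam])
  qed (use W Z w finite_subset in auto)
  finally show ?thesis unfolding C_def .
qed

lemma opnorm_expansion_term_le:
  fixes \<Phi> :: "'v::metric_space set \<Rightarrow> 'v mat" and Q :: "'v mat"
  assumes fin: "inorm_e D lam mu \<Phi> < \<infinity>" and lam: "0 < lam"
    and W: "finite W" and Z: "Z \<subseteq> W"
    and Xss: "\<And>Xs. Xs \<in> \<X> \<Longrightarrow> set Xs \<subseteq> Pow W \<and> length Xs = n"
    and E: "0 \<le> E" "\<And>Xs. Xs \<in> \<X> \<Longrightarrow> linked Z Xs \<Longrightarrow> exp (- mu * (\<Sum>X\<leftarrow>Xs. diameter X)) \<le> E"
  shows "opnorm D W (\<lambda>\<sigma> \<tau>. (\<i> * s) ^ n / of_nat (fact n) * (\<Sum>Xs\<in>\<X>. nested_comm D W \<Phi> (emb Z Q) Xs \<sigma> \<tau>))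
     \<le> opnorm D Z Q * E * exp (lam * real (card Z)) * (2 * inorm D lam mu \<Phi> * cmod s / lam) ^ n"
proof -
  let ?c = "(\<i> * s) ^ n / of_nat (fact n)"
    and ?B = "2 ^ n * opnorm D Z Q * E * (inorm D lam mu \<Phi> ^ n * (exp (lam * real (card Z)) * fact n / lam ^ n))"
  have "opnorm D W (\<lambda>\<sigma> \<tau>. ?c * (\<Sum>Xs\<in>\<X>. nested_comm D W \<Phi> (emb Z Q) Xs \<sigma> \<tau>))
      \<le> cmod ?c * opnorm D W (\<lambda>\<sigma> \<tau>. \<Sum>Xs\<in>\<X>. nested_comm D W \<Phi> (emb Z Q) Xs \<sigma> \<tau>)"
    by (rule opnorm_mult_le[OF W])
  also have "\<dots> \<le> cmod ?c * ?B"
    by (intro mult_left_mono opnorm_sum_nested_comm_decay_le[OF fin lam W Z Xss E] norm_ge_zero)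
  also have "cmod ?c = cmod s ^ n / fact n"
    by (simp add: norm_divide norm_power norm_mult)
  also have "cmod s ^ n / fact n * ?B
      = opnorm D Z Q * E * exp (lam * real (card Z)) * (2 * inorm D lam mu \<Phi> * cmod s / lam) ^ n"
    using lam by (simp add: power_mult_distrib power_divide field_simps)
  finally show ?thesis .
qed

lemma small_coupling:
  assumes "2 * inorm D lam mu \<Phi> * cmod s < lam"
  shows "0 < lam" and "0 \<le> 2 * inorm D lam mu \<Phi> * cmod s / lam" and "2 * inorm D lam mu \<Phi> * cmod s / lam < 1"
proof -
  have "0 \<le> 2 * inorm D lam mu \<Phi> * cmod s" by (simp add: inorm_nonneg)
  then show lam: "0 < lam" using assms by linarith
  show "0 \<le> 2 * inorm D lam mu \<Phi> * cmod s / lam"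
    using lam by (intro divide_nonneg_pos) (simp_all add: inorm_nonneg)
  show "2 * inorm D lam mu \<Phi> * cmod s / lam < 1" using assms lam by simp
qed

lemma opnorm_gam_le:
  fixes \<Phi> :: "'v::metric_space set \<Rightarrow> 'v mat" and Q :: "'v mat"
  assumes fin: "inorm_e D lam mu \<Phi> < \<infinity>" and mu: "0 \<le> mu" and Z: "finite Z" and Y: "finite Y"
    and small: "2 * inorm D lam mu \<Phi> * cmod s < lam"
  shows "opnorm D (Y \<union> Z) (gam D (Y \<union> Z) (ham \<Phi> Y) s (emb Z Q))
      \<le> opnorm D Z Q * exp (lam * real (card Z)) * (lam / (lam - 2 * inorm D lam mu \<Phi> * cmod s))"
proof -
  define W where "W = Y \<union> Z"
  define x where "x = 2 * inorm D lam mu \<Phi> * cmod s / lam"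
  define K where "K = opnorm D Z Q * exp (lam * real (card Z))"
  have W: "finite W" using Y Z by (simp add: W_def)
  note lam = small_coupling(1)[OF small] and x = small_coupling(2,3)[OF small, folded x_def]
  have "opnorm D W (gam D W (ham \<Phi> Y) s (emb Z Q)) \<le> K * (1 / (1 - x))"
  proof (rule opnorm_sums_le[OF W])
    show "(\<lambda>n. (\<i> * s) ^ n / of_nat (fact n) * (comm D W (ham \<Phi> Y) ^^ n) (emb Z Q) \<sigma> \<tau>)
        sums gam D W (ham \<Phi> Y) s (emb Z Q) \<sigma> \<tau>" if "\<sigma> \<in> cfgs D W" "\<tau> \<in> cfgs D W" for \<sigma> \<tau>
      by (rule gam_sums[OF W that])
    show "opnorm D W (\<lambda>\<sigma> \<tau>. (\<i> * s) ^ n / of_nat (fact n) * (comm D W (ham \<Phi> Y) ^^ n) (emb Z Q) \<sigma> \<tau>)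
        \<le> K * x ^ n" for n
    proof -
      have "opnorm D W (\<lambda>\<sigma> \<tau>. (\<i> * s) ^ n / of_nat (fact n) * (comm D W (ham \<Phi> Y) ^^ n) (emb Z Q) \<sigma> \<tau>)
          \<le> opnorm D Z Q * 1 * exp (lam * real (card Z)) * x ^ n"
        unfolding funpow_comm_ham[OF Y] x_def
      proof (rule opnorm_expansion_term_le[OF fin lam W])
        show "exp (- mu * (\<Sum>X\<leftarrow>Xs. diameter X)) \<le> 1" if "Xs \<in> {Xs. set Xs \<subseteq> Pow Y \<and> length Xs = n}" for Xs
        proof -
          have "0 \<le> (\<Sum>X\<leftarrow>Xs. diameter X)"
            using that Y by (intro sum_list_diameter_nonneg) (auto intro: finite_subset)
          then show ?thesis using mu by simp
        qed
      qed (auto simp: W_def)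
      then show ?thesis by (simp add: K_def)
    qed
    show "(\<lambda>n. K * x ^ n) sums (K * (1 / (1 - x)))"
      using x by (intro sums_mult) (simp add: geometric_sums)
  qed
  also have "K * (1 / (1 - x)) = K * (lam / (lam - 2 * inorm D lam mu \<Phi> * cmod s))"
    using lam x by (simp add: x_def field_simps)
  finally show ?thesis unfolding W_def K_def .
qed

lemma setdist_le_sum_diameter:
  fixes Z Y :: "'v::metric_space set"
  assumes "linked Z Xs" "\<And>X. X \<in> set Xs \<Longrightarrow> finite X" "\<not> set Xs \<subseteq> Pow Y"
  shows "setdist Z (- Y) \<le> (\<Sum>X\<leftarrow>Xs. diameter X)"
proof -
  obtain p where p: "p \<in> \<Union>(set Xs)" "p \<notin> Y" using assms(3) by auto
  then obtain z where "z \<in> Z" "dist z p \<le> (\<Sum>X\<leftarrow>Xs. diameter X)"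
    using linked_dist_le_sum_diameter[OF assms(1,2), of p] by auto
  then show ?thesis using setdist_le_dist[of z Z p "- Y"] p by simp
qed

lemma funpow_comm_ham_diff:
  assumes Y': "finite Y'" and YY': "Y \<subseteq> Y'"
  shows "(comm D W (ham \<Phi> Y') ^^ n) B \<sigma> \<tau> - (comm D W (ham \<Phi> Y) ^^ n) B \<sigma> \<tau>
     = (\<Sum>Xs\<in>{Xs. set Xs \<subseteq> Pow Y' \<and> length Xs = n} - {Xs. set Xs \<subseteq> Pow Y \<and> length Xs = n}.
          nested_comm D W \<Phi> B Xs \<sigma> \<tau>)"
proof -
  have Y: "finite Y" using Y' YY' finite_subset by blast
  have "{Xs. set Xs \<subseteq> Pow Y \<and> length Xs = n} \<subseteq> {Xs. set Xs \<subseteq> Pow Y' \<and> length Xs = n}"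
    using YY' by auto
  then show ?thesis
    unfolding funpow_comm_ham[OF Y'] funpow_comm_ham[OF Y] using Y'
    by (simp add: sum_diff finite_lists_length_eq)
qed

lemma opnorm_expansion_diff_term_le:
  fixes \<Phi> :: "'v::metric_space set \<Rightarrow> 'v mat" and Q :: "'v mat"
  assumes fin: "inorm_e D lam mu \<Phi> < \<infinity>" and lam: "0 < lam" and mu: "0 \<le> mu"
    and Y': "finite Y'" and ZY: "Z \<subseteq> Y" and YY': "Y \<subseteq> Y'"
  shows "opnorm D Y' (\<lambda>\<sigma> \<tau>. (\<i> * s) ^ n / of_nat (fact n)
           * ((comm D Y' (ham \<Phi> Y') ^^ n) (emb Z Q) \<sigma> \<tau> - (comm D Y' (ham \<Phi> Y) ^^ n) (emb Z Q) \<sigma> \<tau>))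
     \<le> (if n = 0 then 0 else opnorm D Z Q * exp (- mu * setdist Z (- Y)) * exp (lam * real (card Z))
           * (2 * inorm D lam mu \<Phi> * cmod s / lam) ^ n)"
proof (cases "n = 0")
  case True
  have "opnorm D Y' (\<lambda>\<sigma> \<tau>. (\<i> * s) ^ n / of_nat (fact n)
      * ((comm D Y' (ham \<Phi> Y') ^^ n) (emb Z Q) \<sigma> \<tau> - (comm D Y' (ham \<Phi> Y) ^^ n) (emb Z Q) \<sigma> \<tau>)) = 0"
    using True by (intro opnorm_eq_0[OF Y']) simp
  then show ?thesis unfolding if_P[OF True] by (rule eq_refl)
next
  case False
  text \<open>Only sequences that leave \<open>Y\<close> contribute, and these must bridge the distance from \<open>Z\<close>
    to the complement of \<open>Y\<close>.\<close>
  have decay: "exp (- mu * (\<Sum>X\<leftarrow>Xs. diameter X)) \<le> exp (- mu * setdist Z (- Y))"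
    if Xs: "Xs \<in> {Xs. set Xs \<subseteq> Pow Y' \<and> length Xs = n} - {Xs. set Xs \<subseteq> Pow Y \<and> length Xs = n}"
      and linked: "linked Z Xs" for Xs
  proof -
    from Xs have Xs_Y': "set Xs \<subseteq> Pow Y'" and Xs_Y: "\<not> set Xs \<subseteq> Pow Y" by auto
    have "finite X" if "X \<in> set Xs" for X
      using Xs_Y' that Y' by (auto intro: finite_subset)
    from this Xs_Y have "setdist Z (- Y) \<le> (\<Sum>X\<leftarrow>Xs. diameter X)"
      by (rule setdist_le_sum_diameter[OF linked])
    then show ?thesis using mu by (simp add: mult_left_mono)
  qed
  show ?thesis
    unfolding if_not_P[OF False] funpow_comm_ham_diff[OF Y' YY']
    by (rule opnorm_expansion_term_le[OF fin lam Y' _ _ _ decay]) (use ZY YY' in auto)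
qed

lemma sums_geometric_from_1:
  fixes x :: real
  assumes "\<bar>x\<bar> < 1"
  shows "(\<lambda>n. if n = 0 then 0 else c * x ^ n) sums (c * (x / (1 - x)))"
proof -
  have "(\<lambda>n. c * x * x ^ n) sums (c * x * (1 / (1 - x)))"
    using assms by (intro sums_mult geometric_sums) simp
  then show ?thesis
    using sums_Suc_iff[of "\<lambda>n. if n = 0 then 0 else c * x ^ n"] by (simp add: mult.assoc)
qed

lemma opnorm_gam_diff_le:
  fixes \<Phi> :: "'v::metric_space set \<Rightarrow> 'v mat" and Q :: "'v mat"
  assumes fin: "inorm_e D lam mu \<Phi> < \<infinity>" and mu: "0 \<le> mu" and Z: "finite Z" and Y': "finite Y'"
    and ZY: "Z \<subseteq> Y" and YY': "Y \<subseteq> Y'"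
    and small: "2 * inorm D lam mu \<Phi> * cmod s < lam"
  shows "opnorm D Y' (\<lambda>\<sigma> \<tau>. gam D Y' (ham \<Phi> Y') s (emb Z Q) \<sigma> \<tau> - gam D Y' (ham \<Phi> Y) s (emb Z Q) \<sigma> \<tau>)
      \<le> opnorm D Z Q * exp (lam * real (card Z))
         * (2 * inorm D lam mu \<Phi> * cmod s * lam / (lam - 2 * inorm D lam mu \<Phi> * cmod s)\<^sup>2)
         * exp (- mu * setdist Z (- Y))"
proof -
  define x where "x = 2 * inorm D lam mu \<Phi> * cmod s / lam"
  define C where "C = opnorm D Z Q * exp (- mu * setdist Z (- Y)) * exp (lam * real (card Z))"
  note lam = small_coupling(1)[OF small] and x = small_coupling(2,3)[OF small, folded x_def]
  have C: "0 \<le> C" using opnorm_nonneg[OF Z] by (simp add: C_def)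
  have "opnorm D Y' (\<lambda>\<sigma> \<tau>. gam D Y' (ham \<Phi> Y') s (emb Z Q) \<sigma> \<tau> - gam D Y' (ham \<Phi> Y) s (emb Z Q) \<sigma> \<tau>)
      \<le> C * (x / (1 - x))"
  proof (rule opnorm_sums_le[OF Y'])
    show "(\<lambda>n. (\<i> * s) ^ n / of_nat (fact n)
        * ((comm D Y' (ham \<Phi> Y') ^^ n) (emb Z Q) \<sigma> \<tau> - (comm D Y' (ham \<Phi> Y) ^^ n) (emb Z Q) \<sigma> \<tau>))
        sums (gam D Y' (ham \<Phi> Y') s (emb Z Q) \<sigma> \<tau> - gam D Y' (ham \<Phi> Y) s (emb Z Q) \<sigma> \<tau>)"
      if "\<sigma> \<in> cfgs D Y'" "\<tau> \<in> cfgs D Y'" for \<sigma> \<tau>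
      using sums_diff[OF gam_sums[OF Y' that, where H = "ham \<Phi> Y'"] gam_sums[OF Y' that, where H = "ham \<Phi> Y"]]
      by (simp add: right_diff_distrib)
    show "opnorm D Y' (\<lambda>\<sigma> \<tau>. (\<i> * s) ^ n / of_nat (fact n)
        * ((comm D Y' (ham \<Phi> Y') ^^ n) (emb Z Q) \<sigma> \<tau> - (comm D Y' (ham \<Phi> Y) ^^ n) (emb Z Q) \<sigma> \<tau>))
        \<le> (if n = 0 then 0 else C * x ^ n)" for n
      unfolding C_def x_def by (rule opnorm_expansion_diff_term_le[OF fin lam mu Y' ZY YY'])
    show "(\<lambda>n. if n = 0 then 0 else C * x ^ n) sums (C * (x / (1 - x)))"
      using x by (intro sums_geometric_from_1) simp
  qed
  also have "\<dots> \<le> C * (x / (1 - x)\<^sup>2)"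
  proof (intro mult_left_mono C)
    have "(1 - x)\<^sup>2 \<le> 1 - x" using x by (simp add: power2_eq_square mult_le_cancel_right1)
    then show "x / (1 - x) \<le> x / (1 - x)\<^sup>2" using x by (intro divide_left_mono) auto
  qed
  also have "x / (1 - x)\<^sup>2 = 2 * inorm D lam mu \<Phi> * cmod s * lam / (lam - 2 * inorm D lam mu \<Phi> * cmod s)\<^sup>2"
    using lam x by (simp add: x_def field_simps power2_eq_square)
  finally show ?thesis by (simp add: C_def mult_ac)
qed

theorem proposition2p1:
  fixes D :: nat and lam mu :: real and \<Phi> :: "'v::metric_space set \<Rightarrow> 'v mat"
    and Q :: "'v mat" and Z Y Y' :: "'v set" and s :: complex
  assumes "D > 0" and "lam \<ge> 0" and "mu \<ge> 0"
    and "\<forall>X. finite X \<longrightarrow> (\<forall>\<sigma>\<in>cfgs D X. \<forall>\<tau>\<in>cfgs D X. \<Phi> X \<sigma> \<tau> = cnj (\<Phi> X \<tau> \<sigma>))"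
    and "inorm_e D lam mu \<Phi> < \<infinity>"
    and "finite Z"
  shows "(finite Y \<longrightarrow> 2 * inorm D lam mu \<Phi> * cmod s < lam \<longrightarrow>
            opnorm D (Y \<union> Z) (gam D (Y \<union> Z) (ham \<Phi> Y) s (emb Z Q))
              \<le> opnorm D Z Q * exp (lam * real (card Z))
                 * (lam / (lam - 2 * inorm D lam mu \<Phi> * cmod s)))
       \<and> (finite Y' \<longrightarrow> Z \<subseteq> Y \<longrightarrow> Y \<subseteq> Y' \<longrightarrow> 2 * inorm D lam mu \<Phi> * cmod s < lam \<longrightarrow>
            opnorm D Y' (\<lambda>\<sigma> \<tau>. gam D Y' (ham \<Phi> Y') s (emb Z Q) \<sigma> \<tau>
                               - gam D Y' (ham \<Phi> Y) s (emb Z Q) \<sigma> \<tau>)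
              \<le> opnorm D Z Q * exp (lam * real (card Z))
                 * (2 * inorm D lam mu \<Phi> * cmod s * lam
                    / (lam - 2 * inorm D lam mu \<Phi> * cmod s)\<^sup>2)
                 * exp (- mu * setdist Z (- Y)))"
  using opnorm_gam_le[OF assms(5,3,6)] opnorm_gam_diff_le[OF assms(5,3,6)] by blast

end
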